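(* Every AND-OR net, i.e. every net in $\mathbf S(\mathbf{pAND}\cup\mathbf{11tAND}\cup\mathbf{11pOR}\cup\mathbf{tOR})$, is sub-sound.
   Context: Petri nets and markings. A Petri net is a triple $(P,T,F)$ with $P$ a finite set of places, $T$ a finite set of transitions, $P\cap T=\emptyset$, and $F\subseteq (P\times T)\cup(T\times P)$. For a node $x$, $\bullet x=\{y\mid (y,x)\in F\}$, $x\bullet=\{y\mid (x,y)\in F\}$. A marking is a multiset over $P$ (a function $P\to\mathbb N$); sets of places are identified with bags of multiplicity one, $+,-,\le$ are pointwise, and $k.m$ is the sum of $k$ copies of $m$. Transition $t$ is enabled at $m$ iff $\bullet t\le m$, firing gives $m-\bullet t+t\bullet$, and $m\xrightarrow{*}m'$ denotes reachability by a finite (possibly empty) firing sequence. Workflow nets. A pWF net is $(P,T,F,I,O)$ with $(P,T,F)$ a Petri net, $I,O\subseteq P$ non-empty, every node reachable by a directed path from some node of $I$, and some node of $O$ reachable from every node. A tWF net is the same with $I,O$ non-empty subsets of $T$. Input nodes may have incoming edges and output nodes outgoing edges. A WF net is a pWF or tWF net; it is one-input (one-output) if $|I|=1$ ($|O|=1$). The place-completion $\mathrm{pc}(N)$ of a tWF net $N=(P,T,F,I,O)$ is obtained by adding two fresh places $p_i,p_o$ with edges $(p_i,t)$ for all $t\in I$ and $(t,p_o)$ for all $t\in O$, and taking input set $\{p_i\}$ and output set $\{p_o\}$. Sub-soundness. A pWF net is sub-sound if for all integers $k\ge k'\ge 0$ and every marking $m'$: if $k.I\xrightarrow{*}m'+k'.O$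 then $m'\xrightarrow{*}(k-k').O$. A tWF net is sub-sound iff its place-completion is. Substitution. Let $N=(P,T,F,I,O)$ and $M=(P',T',F',I',O')$ be WF nets with disjoint node sets. If $p\in P$ and $M$ is a pWF net, $N\otimes_p M$ is obtained from $N$ by deleting $p$ and all edges incident to $p$, adding all nodes and edges of $M$, adding an edge $(t,p')$ for each $t\in\bullet_N p$ and each $p'\in I'$, and an edge $(p',t)$ for each $p'\in O'$ and each $t\in p\bullet_N$; its input set is $(I\setminus\{p\})\cup I'$ if $p\in I$ and $I$ otherwise, and its output set is $(O\setminus\{p\})\cup O'$ if $p\in O$ and $O$ otherwise. If $t\in T$ and $M$ is a tWF net, $N\otimes_t M$ is defined analogously: delete $t$ and its edges, add $M$, add $(q,t')$ for each $q\in\bullet_N t$, $t'\in I'$, and $(t',q)$ for each $t'\in O'$, $q\in t\bullet_N$, with input/output sets updated in the same way. The substitution closure $\mathbf S(C)$ of a class $C$ of WF nets is the smallest superclass of $C$ such that whenever $N,M\in\mathbf S(C)$ are disjoint, $N\otimes_p M\in\mathbf S(C)$ for every place $p$ of $N$ if $M$ is a pWF net, and $N\otimes_t M\in\mathbf S(C)$ for every transition $t$ of $N$ if $M$ is a tWF net. AND and OR nets. An AND net is an acyclic WF net $(P,T,F,I,O)$ such that for every place $p$: (1) either $p\in I$ and $|\bullet p|=0$, or $p\notin I$ and $|\bullet p|=1$; and (2) either $p\in O$ and $|p\bullet|=0$, or $p\notin O$ and $|p\bullet|=1$. An OR net is a (possibly cyclic) WF net such that for every transition $t$: (1) either $t\in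 I$ and $|\bullet t|=0$, or $t\notin I$ and $|\bullet t|=1$; and (2) either $t\in O$ and $|t\bullet|=0$, or $t\notin O$ and $|t\bullet|=1$. A pAND (tAND, pOR, tOR) net is an AND (AND, OR, OR) net that is a pWF (tWF, pWF, tWF) net. $\mathbf{pAND}$ is the class of pAND nets, $\mathbf{11tAND}$ the class of one-input one-output tAND nets, $\mathbf{11pOR}$ the class of one-input one-output pOR nets, and $\mathbf{tOR}$ the class of tOR nets. *)

theory Defs
  imports Main "HOL-Library.Multiset"
begin

record 'n net =
  places :: "'n set"
  trans  :: "'n set"
  flow   :: "('n \<times> 'n) set"
  inp    :: "'n set"
  outp   :: "'n set"

definition nodes :: "('n, 'z) net_scheme \<Rightarrow> 'n set" where
  "nodes N = places N \<union> trans N"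

definition preset :: "('n, 'z) net_scheme \<Rightarrow> 'n \<Rightarrow> 'n set" where
  "preset N x = {y. (y, x) \<in> flow N}"

definition postset :: "('n, 'z) net_scheme \<Rightarrow> 'n \<Rightarrow> 'n set" where
  "postset N x = {y. (x, y) \<in> flow N}"

definition petri_net :: "('n, 'z) net_scheme \<Rightarrow> bool" where
  "petri_net N \<longleftrightarrow> finite (places N) \<and> finite (trans N)
     \<and> places N \<inter> trans N = {}
     \<and> flow N \<subseteq> (places N \<times> trans N) \<union> (trans N \<times> places N)"

text \<open>Markings are multisets of places; a set of places is the multiset of multiplicity one.\<close>

definition marking :: "('n, 'z) net_scheme \<Rightarrow> 'n multiset \<Rightarrow> bool" where
  "marking N m \<longleftrightarrow> set_mset m \<subseteq> places N"

definition fire :: "('n, 'z) net_scheme \<Rightarrow> 'n multiset \<Rightarrow> 'n multiset \<Rightarrow> bool" where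
  "fire N m m' \<longleftrightarrow> (\<exists>t \<in> trans N. mset_set (preset N t) \<subseteq># m
       \<and> m' = m - mset_set (preset N t) + mset_set (postset N t))"

definition reach :: "('n, 'z) net_scheme \<Rightarrow> 'n multiset \<Rightarrow> 'n multiset \<Rightarrow> bool" where
  "reach N = (fire N)\<^sup>*\<^sup>*"

definition wf_conn :: "('n, 'z) net_scheme \<Rightarrow> bool" where
  "wf_conn N \<longleftrightarrow> inp N \<noteq> {} \<and> outp N \<noteq> {}
     \<and> (\<forall>x \<in> nodes N. \<exists>i \<in> inp N. (i, x) \<in> (flow N)\<^sup>*)
     \<and> (\<forall>x \<in> nodes N. \<exists>q \<in> outp N. (x, q) \<in> (flow N)\<^sup>*)"

definition pWF :: "('n, 'z) net_scheme \<Rightarrow> bool" where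
  "pWF N \<longleftrightarrow> petri_net N \<and> inp N \<subseteq> places N \<and> outp N \<subseteq> places N \<and> wf_conn N"

definition tWF :: "('n, 'z) net_scheme \<Rightarrow> bool" where
  "tWF N \<longleftrightarrow> petri_net N \<and> inp N \<subseteq> trans N \<and> outp N \<subseteq> trans N \<and> wf_conn N"

definition WF :: "('n, 'z) net_scheme \<Rightarrow> bool" where
  "WF N \<longleftrightarrow> pWF N \<or> tWF N"

text \<open>Place completion; the two fresh places are realised as \<open>Inr False\<close> (p_i)
  and \<open>Inr True\<close> (p_o), the original nodes are tagged with \<open>Inl\<close>.\<close>

definition pc :: "'n net \<Rightarrow> ('n + bool) net" where
  "pc N = \<lparr> places = Inl ` places N \<union> {Inr False, Inr True},
            trans = Inl ` trans N,
            flow = map_prod Inl Inl ` flow N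
                   \<union> {(Inr False, Inl t) | t. t \<in> inp N}
                   \<union> {(Inl t, Inr True) | t. t \<in> outp N},
            inp = {Inr False},
            outp = {Inr True} \<rparr>"

definition sub_sound_p :: "('n, 'z) net_scheme \<Rightarrow> bool" where
  "sub_sound_p N \<longleftrightarrow> (\<forall>k k' m'. k' \<le> k \<longrightarrow> marking N m' \<longrightarrow>
      reach N (repeat_mset k (mset_set (inp N))) (m' + repeat_mset k' (mset_set (outp N)))
      \<longrightarrow> reach N m' (repeat_mset (k - k') (mset_set (outp N))))"

definition sub_sound :: "'n net \<Rightarrow> bool" where
  "sub_sound N \<longleftrightarrow> (pWF N \<and> sub_sound_p N) \<or> (tWF N \<and> sub_sound_p (pc N))"

definition subst_place :: "'n net \<Rightarrow> 'n \<Rightarrow> 'n net \<Rightarrow> 'n net" where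
  "subst_place N p M = \<lparr>
     places = (places N - {p}) \<union> places M,
     trans = trans N \<union> trans M,
     flow = {e \<in> flow N. fst e \<noteq> p \<and> snd e \<noteq> p} \<union> flow M
            \<union> {(t, p') | t p'. t \<in> preset N p \<and> p' \<in> inp M}
            \<union> {(p', t) | p' t. p' \<in> outp M \<and> t \<in> postset N p},
     inp = (if p \<in> inp N then (inp N - {p}) \<union> inp M else inp N),
     outp = (if p \<in> outp N then (outp N - {p}) \<union> outp M else outp N) \<rparr>"

definition subst_trans :: "'n net \<Rightarrow> 'n \<Rightarrow> 'n net \<Rightarrow> 'n net" where
  "subst_trans N t M = \<lparr>
     places = places N \<union> places M,
     trans = (trans N - {t}) \<union> trans M,
     flow = {e \<in> flow N. fst e \<noteq> t \<and> snd e \<noteq> t} \<union> flow M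
            \<union> {(q, t') | q t'. q \<in> preset N t \<and> t' \<in> inp M}
            \<union> {(t', q) | t' q. t' \<in> outp M \<and> q \<in> postset N t},
     inp = (if t \<in> inp N then (inp N - {t}) \<union> inp M else inp N),
     outp = (if t \<in> outp N then (outp N - {t}) \<union> outp M else outp N) \<rparr>"

inductive_set subst_closure :: "'n net set \<Rightarrow> 'n net set" for C :: "'n net set" where
  base: "N \<in> C \<Longrightarrow> N \<in> subst_closure C"
| place: "\<lbrakk>N \<in> subst_closure C; M \<in> subst_closure C; nodes N \<inter> nodes M = {};
           p \<in> places N; pWF M\<rbrakk> \<Longrightarrow> subst_place N p M \<in> subst_closure C"
| trans: "\<lbrakk>N \<in> subst_closure C; M \<in> subst_closure C; nodes N \<inter> nodes M = {};
           t \<in> trans N; tWF M\<rbrakk> \<Longrightarrow> subst_trans N t M \<in> subst_closure C"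

definition AND_net :: "'n net \<Rightarrow> bool" where
  "AND_net N \<longleftrightarrow> WF N \<and> acyclic (flow N) \<and>
     (\<forall>p \<in> places N.
        ((p \<in> inp N \<and> card (preset N p) = 0) \<or> (p \<notin> inp N \<and> card (preset N p) = 1))
      \<and> ((p \<in> outp N \<and> card (postset N p) = 0) \<or> (p \<notin> outp N \<and> card (postset N p) = 1)))"

definition OR_net :: "'n net \<Rightarrow> bool" where
  "OR_net N \<longleftrightarrow> WF N \<and>
     (\<forall>t \<in> trans N.
        ((t \<in> inp N \<and> card (preset N t) = 0) \<or> (t \<notin> inp N \<and> card (preset N t) = 1))
      \<and> ((t \<in> outp N \<and> card (postset N t) = 0) \<or> (t \<notin> outp N \<and> card (postset N t) = 1)))"

definition pAND :: "'n net set" where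
  "pAND = {N. AND_net N \<and> pWF N}"

definition tAND11 :: "'n net set" where
  "tAND11 = {N. AND_net N \<and> tWF N \<and> card (inp N) = 1 \<and> card (outp N) = 1}"

definition pOR11 :: "'n net set" where
  "pOR11 = {N. OR_net N \<and> pWF N \<and> card (inp N) = 1 \<and> card (outp N) = 1}"

definition tOR :: "'n net set" where
  "tOR = {N. OR_net N \<and> tWF N}"

end

theory Submission
  imports Defs
begin

(* One-input one-output pOR nets and place-completed tOR nets are state
   machines (every transition has exactly one input and one output place); the size of a
   marking is invariant and every token can be moved to the output place, which gives
   sub-soundness.  pAND nets and place-completed 11tAND nets are acyclic nets in which
   every place has one producer and one consumer; via the marking equation a reachable
   marking determines how often each transition fired, and firing the still enabled
   transitions in topological order completes the run.  Substituting a sub-sound net M for a place (transition) of a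
   sub-sound net N yields a sub-sound net: every run of the composed net projects onto
   a run of N and a run of M (with tokens "inside M" counted by an abstract place or
   transition of N), sub-soundness of both components finishes these runs, and the
   finishing runs are simulated back in the composed net.  Substitutions into tWF nets
   are reduced to substitutions into their place completions; renaming nodes with an
   injective function keeps node sets disjoint and preserves sub-soundness. *)

lemma petri_net_finite_flow: "petri_net X \<Longrightarrow> finite (flow X)"
  unfolding petri_net_def by (meson finite_SigmaI finite_Un rev_finite_subset)

lemma petri_net_finite_preset: "petri_net X \<Longrightarrow> finite (preset X u)"
proof -
  assume "petri_net X"
  then have "finite (fst ` flow X)" by (simp add: petri_net_finite_flow)
  moreover have "preset X u \<subseteq> fst ` flow X" unfolding preset_def by force
  ultimately show ?thesis by (rule finite_subset[rotated])
qed

lemma petri_net_finite_postset: "petri_net X \<Longrightarrow> finite (postset X u)"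
proof -
  assume "petri_net X"
  then have "finite (snd ` flow X)" by (simp add: petri_net_finite_flow)
  moreover have "postset X u \<subseteq> snd ` flow X" unfolding postset_def by force
  ultimately show ?thesis by (rule finite_subset[rotated])
qed

lemma preset_trans_places: "petri_net X \<Longrightarrow> u \<in> trans X \<Longrightarrow> preset X u \<subseteq> places X"
  unfolding petri_net_def preset_def by auto

lemma postset_trans_places: "petri_net X \<Longrightarrow> u \<in> trans X \<Longrightarrow> postset X u \<subseteq> places X"
  unfolding petri_net_def postset_def by auto

lemma preset_place_trans: "petri_net X \<Longrightarrow> q \<in> places X \<Longrightarrow> preset X q \<subseteq> trans X"
  unfolding petri_net_def preset_def by auto

lemma postset_place_trans: "petri_net X \<Longrightarrow> q \<in> places X \<Longrightarrow> postset X q \<subseteq> trans X"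
  unfolding petri_net_def postset_def by auto

lemma flow_in_nodes: "petri_net X \<Longrightarrow> (a, b) \<in> flow X \<Longrightarrow> a \<in> nodes X \<and> b \<in> nodes X"
  unfolding petri_net_def nodes_def by auto

lemma flow_irrefl: "petri_net X \<Longrightarrow> (a, a) \<notin> flow X"
  unfolding petri_net_def by auto

lemma count_mset_set_if: "finite A \<Longrightarrow> count (mset_set A) x = (if x \<in> A then 1 else 0)"
  by simp

lemma in_repeat_mset [simp]: "x \<in># repeat_mset n A \<longleftrightarrow> n > 0 \<and> x \<in># A"
  unfolding count_greater_zero_iff[symmetric] by simp

lemma in_count_le_add: "x \<in># m \<Longrightarrow> Suc 0 \<le> a + count m x + b" "x \<in># m \<Longrightarrow> Suc 0 \<le> a + count m x"
  "x \<in># m \<Longrightarrow> Suc 0 \<le> count m x + b"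
  by (simp_all add: Suc_le_eq)

lemma count_ge_Suc_in: "Suc n \<le> count m q \<Longrightarrow> q \<in># m"
  by (metis Suc_le_lessD count_greater_zero_iff le_less_trans zero_le)

text \<open>Firing and reachability.  The firing rule is restated as a cancellation-free
  equation, which is easier to verify pointwise.\<close>

lemma reach_trans: "reach X a b \<Longrightarrow> reach X b c \<Longrightarrow> reach X a c"
  unfolding reach_def by simp

lemma fire_reach: "fire X a b \<Longrightarrow> reach X a b"
  unfolding reach_def by simp

lemma reach_fire_trans: "reach X a b \<Longrightarrow> fire X b c \<Longrightarrow> reach X a c"
  unfolding reach_def by simp

lemma fire_intro:
  assumes "u \<in> trans X" "mset_set (preset X u) \<subseteq># m"
    "m' + mset_set (preset X u) = m + mset_set (postset X u)"
  shows "fire X m m'"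
  unfolding fire_def
proof (intro bexI[OF _ assms(1)] conjI assms(2) multiset_eqI)
  fix x
  have "count m' x + count (mset_set (preset X u)) x = count m x + count (mset_set (postset X u)) x"
    using assms(3) by (metis count_union)
  moreover have "count (mset_set (preset X u)) x \<le> count m x"
    using assms(2) by (simp add: subseteq_mset_def)
  ultimately show "count m' x = count (m - mset_set (preset X u) + mset_set (postset X u)) x"
    by simp
qed

lemma fire_elim:
  assumes "fire X m m'"
  obtains u where "u \<in> trans X" "mset_set (preset X u) \<subseteq># m"
    "m' + mset_set (preset X u) = m + mset_set (postset X u)"
proof -
  from assms obtain u where u: "u \<in> trans X" "mset_set (preset X u) \<subseteq># m"
    "m' = m - mset_set (preset X u) + mset_set (postset X u)" unfolding fire_def by blast
  have "m' + mset_set (preset X u) = m + mset_set (postset X u)"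
  proof (rule multiset_eqI)
    fix x
    have "count (mset_set (preset X u)) x \<le> count m x"
      using u(2) by (simp add: subseteq_mset_def)
    then show "count (m' + mset_set (preset X u)) x = count (m + mset_set (postset X u)) x"
      using u(3) by simp
  qed
  with u that show ?thesis by blast
qed

lemma fire_mono: "fire X a b \<Longrightarrow> fire X (a + c) (b + c)"
proof (erule fire_elim)
  fix u assume u: "u \<in> trans X" "mset_set (preset X u) \<subseteq># a"
    "b + mset_set (preset X u) = a + mset_set (postset X u)"
  show "fire X (a + c) (b + c)"
  proof (rule fire_intro[OF u(1)])
    show "mset_set (preset X u) \<subseteq># a + c" using u(2) by (simp add: subset_mset.add_increasing2)
    show "b + c + mset_set (preset X u) = a + c + mset_set (postset X u)"
      using u(3) by (simp add: add_ac)
  qed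
qed

lemma reach_mono: "reach X a b \<Longrightarrow> reach X (a + c) (b + c)"
  unfolding reach_def
proof (induction rule: rtranclp_induct)
  case (step y z) then show ?case by (meson fire_mono rtranclp.rtrancl_into_rtrancl)
qed simp

lemma reach_add: "reach X a b \<Longrightarrow> reach X c d \<Longrightarrow> reach X (a + c) (b + d)"
  by (metis add.commute reach_mono reach_trans)

lemma reach_simulation:
  assumes "R\<^sup>*\<^sup>* a b" "\<And>y z. R y z \<Longrightarrow> reach X (f y) (f z)"
  shows "reach X (f a) (f b)"
  using assms(1)
proof (induction rule: rtranclp_induct)
  case (step y z) then show ?case using assms(2) reach_trans by blast
qed (simp add: reach_def)

lemma reach_nonempty:
  assumes "reach X a b" "a \<noteq> {#}" "\<And>u. u \<in> trans X \<Longrightarrow> postset X u \<noteq> {}"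
    "\<And>u. finite (postset X u)"
  shows "b \<noteq> {#}"
  using assms(1,2) unfolding reach_def
proof (induction rule: rtranclp_induct)
  case (step y z)
  then obtain u where u: "u \<in> trans X" "mset_set (preset X u) \<subseteq># y"
    "z + mset_set (preset X u) = y + mset_set (postset X u)"
    by (auto elim: fire_elim)
  have "size (mset_set (postset X u)) > 0" using assms(3,4) u(1)
    by (simp add: card_gt_0_iff)
  moreover have "size (mset_set (preset X u)) \<le> size y" using u(2) by (rule size_mset_mono)
  moreover have "size z + size (mset_set (preset X u)) = size y + size (mset_set (postset X u))"
    using u(3) by (metis size_union)
  ultimately show ?case by auto
qed simp

lemma pWF_petri_net: "pWF X \<Longrightarrow> petri_net X"
  unfolding pWF_def by simp

lemma tWF_petri_net: "tWF X \<Longrightarrow> petri_net X"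
  unfolding tWF_def by simp

lemma pWF_finite_inp: "pWF X \<Longrightarrow> finite (inp X)"
  unfolding pWF_def petri_net_def by (meson finite_subset)

lemma pWF_finite_outp: "pWF X \<Longrightarrow> finite (outp X)"
  unfolding pWF_def petri_net_def by (meson finite_subset)

lemma pWF_outp_nonempty: "pWF X \<Longrightarrow> outp X \<noteq> {}"
  unfolding pWF_def wf_conn_def by simp

lemma not_pWF_and_tWF: "pWF X \<Longrightarrow> tWF X \<Longrightarrow> False"
  unfolding pWF_def tWF_def wf_conn_def petri_net_def by blast

text \<open>In a pWF net every transition has an input and an output place, since it lies on
  a path from an input place to an output place.\<close>

lemma pWF_postset_nonempty:
  assumes "pWF X" "u \<in> trans X" shows "postset X u \<noteq> {}"
proof -
  have "u \<in> nodes X" using assms(2) by (simp add: nodes_def)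
  then obtain q where q: "q \<in> outp X" "(u, q) \<in> (flow X)\<^sup>*"
    using assms(1) unfolding pWF_def wf_conn_def by blast
  have "u \<noteq> q" using q(1) assms unfolding pWF_def petri_net_def by auto
  then obtain y where "(u, y) \<in> flow X" using q(2) by (metis converse_rtranclE)
  then show ?thesis unfolding postset_def by auto
qed

lemma pWF_preset_nonempty:
  assumes "pWF X" "u \<in> trans X" shows "preset X u \<noteq> {}"
proof -
  have "u \<in> nodes X" using assms(2) by (simp add: nodes_def)
  then obtain i where i: "i \<in> inp X" "(i, u) \<in> (flow X)\<^sup>*"
    using assms(1) unfolding pWF_def wf_conn_def by blast
  have "u \<noteq> i" using i(1) assms unfolding pWF_def petri_net_def by auto
  then obtain y where "(y, u) \<in> flow X" using i(2) by (metis rtranclE)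
  then show ?thesis unfolding preset_def by auto
qed

lemma marking_add: "marking X (a + b) \<longleftrightarrow> marking X a \<and> marking X b"
  unfolding marking_def by auto

lemma marking_repeat_outp: "pWF X \<Longrightarrow> marking X (repeat_mset n (mset_set (outp X)))"
  using pWF_finite_outp[of X] unfolding marking_def pWF_def by auto

lemma sub_sound_no_overproduction:
  assumes "pWF X" "sub_sound_p X" "marking X a"
    "reach X (repeat_mset J (mset_set (inp X))) (a + repeat_mset J' (mset_set (outp X)))"
  shows "J' \<le> J"
proof (rule ccontr)
  assume "\<not> J' \<le> J"
  then obtain d where d: "J' = J + d" "d > 0" by (metis less_imp_add_positive not_le)
  let ?O = "mset_set (outp X)"
  have split: "a + repeat_mset J' ?O = (a + repeat_mset d ?O) + repeat_mset J ?O"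
    using d(1) by (simp add: repeat_mset_distrib add_ac)
  have "marking X (a + repeat_mset d ?O)"
    using assms(3) marking_repeat_outp[OF assms(1)] by (simp add: marking_add)
  then have "reach X (a + repeat_mset d ?O) (repeat_mset (J - J) ?O)"
    using assms(2,4) unfolding sub_sound_p_def split by blast
  then have empty_reached: "reach X (a + repeat_mset d ?O) {#}" by simp
  have "?O \<noteq> {#}" using pWF_finite_outp[OF assms(1)] pWF_outp_nonempty[OF assms(1)]
    by (simp add: mset_set_empty_iff)
  then have "a + repeat_mset d ?O \<noteq> {#}" using d(2) by (simp add: repeat_mset_eq_empty_iff)
  from reach_nonempty[OF empty_reached this] show False
    using pWF_postset_nonempty[OF assms(1)] petri_net_finite_postset[OF pWF_petri_net[OF assms(1)]]
    by blast
qed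

lemma sub_sound_single_run:
  assumes "pWF X" "sub_sound_p X" shows "reach X (mset_set (inp X)) (mset_set (outp X))"
proof -
  have "marking X (mset_set (inp X))" using assms(1) pWF_finite_inp[OF assms(1)]
    unfolding marking_def pWF_def by auto
  moreover have "reach X (repeat_mset 1 (mset_set (inp X)))
      (mset_set (inp X) + repeat_mset 0 (mset_set (outp X)))" by (simp add: reach_def)
  ultimately have "reach X (mset_set (inp X)) (repeat_mset (1 - 0) (mset_set (outp X)))"
    using assms(2) unfolding sub_sound_p_def by blast
  then show ?thesis by simp
qed

definition state_machine :: "('n, 'z) net_scheme \<Rightarrow> bool" where
  "state_machine X \<longleftrightarrow> (\<forall>u \<in> trans X. card (preset X u) = 1 \<and> card (postset X u) = 1)"

text \<open>Firing a transition of a state machine moves a single token, so the number of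
  tokens is invariant.\<close>

lemma state_machine_reach_size:
  assumes "petri_net X" "state_machine X" "reach X a b"
  shows "size b = size a"
  using assms(3) unfolding reach_def
proof (induction rule: rtranclp_induct)
  case (step y z)
  then obtain u where u: "u \<in> trans X" "z + mset_set (preset X u) = y + mset_set (postset X u)"
    by (auto elim: fire_elim)
  have "size z + card (preset X u) = size y + card (postset X u)"
    using u(2) by (metis size_union size_mset_set)
  then show ?case using assms(2) u(1) step.IH unfolding state_machine_def by simp
qed simp

lemma state_machine_token_path:
  assumes pn: "petri_net X" and sm: "state_machine X"
    and target: "q \<in> places X" and path: "(x, q) \<in> (flow X)\<^sup>*"
  shows "(x \<in> places X \<longrightarrow> reach X {#x#} {#q#}) \<and>
         (x \<in> trans X \<longrightarrow> (\<forall>b. postset X x = {b} \<longrightarrow> reach X {#b#} {#q#}))"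
  using path
proof (induction rule: converse_rtrancl_induct)
  case base
  then show ?case using target pn unfolding petri_net_def reach_def by auto
next
  case (step x y)
  show ?case
  proof (intro conjI impI allI)
    assume xp: "x \<in> places X"
    then have yt: "y \<in> trans X" using step(1) pn unfolding petri_net_def by auto
    have one: "card (preset X y) = 1" "card (postset X y) = 1"
      using sm yt unfolding state_machine_def by auto
    have "x \<in> preset X y" using step(1) unfolding preset_def by simp
    then have pre: "preset X y = {x}" using one(1) by (metis card_1_singletonE singletonD)
    obtain b where post: "postset X y = {b}" using one(2) by (metis card_1_singletonE)
    have "fire X {#x#} {#b#}"
      by (rule fire_intro[OF yt]) (simp_all add: pre post)
    then show "reach X {#x#} {#q#}" using step(3) yt post by (meson fire_reach reach_trans)
  next
    fix b assume xt: "x \<in> trans X" and post: "postset X x = {b}"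
    have "y \<in> postset X x" using step(1) unfolding postset_def by simp
    moreover have "y \<in> places X" using step(1) xt pn unfolding petri_net_def by auto
    ultimately show "reach X {#b#} {#q#}" using step(3) post by simp
  qed
qed

text \<open>A one-input one-output pWF state machine is sub-sound: a reachable marking has
  exactly \<open>k - k'\<close> tokens besides the \<open>k'\<close> output tokens, and each of them can be moved
  to the output place.\<close>

lemma state_machine_sub_sound:
  assumes pw: "pWF X" and sm: "state_machine X" and i0: "inp X = {i0}" and o0: "outp X = {o0}"
  shows "sub_sound_p X"
proof -
  have pn: "petri_net X" using pw by (rule pWF_petri_net)
  have target: "o0 \<in> places X" using pw o0 unfolding pWF_def by auto
  have token_to_output: "reach X {#q#} {#o0#}" if q: "q \<in> places X" for q
  proof -
    have "q \<in> nodes X" using q by (simp add: nodes_def)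
    then have "(q, o0) \<in> (flow X)\<^sup>*" using pw o0 unfolding pWF_def wf_conn_def by auto
    then show ?thesis using state_machine_token_path[OF pn sm target] q by blast
  qed
  have all_to_output: "marking X m \<Longrightarrow> reach X m (replicate_mset (size m) o0)" for m
  proof (induction m)
    case (add x m)
    then have "x \<in> places X" "marking X m" unfolding marking_def by auto
    then have "reach X ({#x#} + m) ({#o0#} + replicate_mset (size m) o0)"
      using add token_to_output by (intro reach_add) auto
    then show ?case by simp
  qed (simp add: reach_def)
  show ?thesis unfolding sub_sound_p_def
  proof (intro allI impI)
    fix k k' m' assume "k' \<le> k" and mk: "marking X m'"
      and r: "reach X (repeat_mset k (mset_set (inp X))) (m' + repeat_mset k' (mset_set (outp X)))"
    have "size (m' + repeat_mset k' (mset_set (outp X))) = size (repeat_mset k (mset_set (inp X)))"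
      by (rule state_machine_reach_size[OF pn sm r])
    then have "size m' = k - k'" using i0 o0 by simp
    then show "reach X m' (repeat_mset (k - k') (mset_set (outp X)))"
      using all_to_output[OF mk] o0 by simp
  qed
qed

text \<open>The marking equation: a vector \<open>x\<close> counts how often each transition fired on a
  run from \<open>m0\<close> to \<open>m\<close> if the token balance of every place is accounted for by the
  firings of its producers and consumers.\<close>

definition marking_equation ::
  "('n, 'z) net_scheme \<Rightarrow> 'n multiset \<Rightarrow> 'n multiset \<Rightarrow> ('n \<Rightarrow> nat) \<Rightarrow> bool" where
  "marking_equation X m0 m x \<longleftrightarrow> (\<forall>q \<in> places X.
      count m q + (\<Sum>v \<in> postset X q. x v) = count m0 q + (\<Sum>v \<in> preset X q. x v))"

lemma sum_fun_upd_Suc: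
  fixes x :: "'a \<Rightarrow> nat"
  assumes "finite A"
  shows "(\<Sum>v \<in> A. (x(u := Suc (x u))) v) = (\<Sum>v \<in> A. x v) + (if u \<in> A then 1 else 0)"
proof -
  have "(\<Sum>v \<in> A. (x(u := Suc (x u))) v) = (\<Sum>v \<in> A. x v + (if v = u then 1 else 0))"
    by (rule sum.cong) auto
  also have "\<dots> = (\<Sum>v \<in> A. x v) + (\<Sum>v \<in> A. if v = u then 1 else 0)"
    by (rule sum.distrib)
  finally show ?thesis using assms by (simp add: sum.delta')
qed

lemma marking_equation_fire:
  assumes pn: "petri_net X" and u: "u \<in> trans X"
    and step: "m2 + mset_set (preset X u) = m + mset_set (postset X u)"
    and eq: "marking_equation X m0 m x"
  shows "marking_equation X m0 m2 (x(u := Suc (x u)))"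
  unfolding marking_equation_def
proof
  fix q assume q: "q \<in> places X"
  have balance: "count m2 q + (if q \<in> preset X u then 1 else 0)
      = count m q + (if q \<in> postset X u then 1 else 0)"
    using arg_cong[OF step, of "\<lambda>z. count z q"]
    unfolding count_union count_mset_set_if[OF petri_net_finite_preset[OF pn]]
      count_mset_set_if[OF petri_net_finite_postset[OF pn]] .
  have flip: "(q \<in> preset X u) = (u \<in> postset X q)" "(q \<in> postset X u) = (u \<in> preset X q)"
    unfolding preset_def postset_def by auto
  have old: "count m q + (\<Sum>v \<in> postset X q. x v) = count m0 q + (\<Sum>v \<in> preset X q. x v)"
    using eq q unfolding marking_equation_def by blast
  show "count m2 q + (\<Sum>v \<in> postset X q. (x(u := Suc (x u))) v)
      = count m0 q + (\<Sum>v \<in> preset X q. (x(u := Suc (x u))) v)"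
    unfolding sum_fun_upd_Suc[OF petri_net_finite_preset[OF pn]]
      sum_fun_upd_Suc[OF petri_net_finite_postset[OF pn]]
    using balance flip old by (auto split: if_splits)
qed

lemma marking_equation_reach:
  assumes pn: "petri_net X" and r: "reach X m0 m"
  shows "\<exists>x. marking_equation X m0 m x"
  using r unfolding reach_def
proof (induction rule: rtranclp_induct)
  case base
  have "marking_equation X m0 m0 (\<lambda>_. 0)" unfolding marking_equation_def by simp
  then show ?case by blast
next
  case (step y z)
  then obtain x where "marking_equation X m0 y x" by blast
  moreover from step(2) obtain u where "u \<in> trans X"
    "z + mset_set (preset X u) = y + mset_set (postset X u)" by (auto elim: fire_elim)
  ultimately show ?case using marking_equation_fire[OF pn] by blast
qed

lemma sum_missing_decreases:
  fixes x :: "'a \<Rightarrow> nat"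
  assumes "finite A" "z \<in> A" "x z < k"
  shows "(\<Sum>u \<in> A. k - (x(z := Suc (x z))) u) < (\<Sum>u \<in> A. k - x u)"
proof -
  have "(\<Sum>u \<in> A - {z}. k - (x(z := Suc (x z))) u) = (\<Sum>u \<in> A - {z}. k - x u)"
    by (rule sum.cong) auto
  then show ?thesis using assms by (simp add: sum.remove)
qed

locale acyclic_and_net =
  fixes X :: "('n, 'z) net_scheme"
  assumes pw: "pWF X" and wf_flow: "wf (flow X)"
    and producers: "\<And>q. q \<in> places X \<Longrightarrow> (if q \<in> inp X then 1 else 0) + card (preset X q) = 1"
    and consumers: "\<And>q. q \<in> places X \<Longrightarrow> (if q \<in> outp X then 1 else 0) + card (postset X q) = 1"
begin

lemma pn: "petri_net X"
  using pw by (rule pWF_petri_net)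

lemma card_preset_postset:
  "q \<in> places X \<Longrightarrow> card (preset X q) = (if q \<in> inp X then 0 else 1)"
  "q \<in> places X \<Longrightarrow> card (postset X q) = (if q \<in> outp X then 0 else 1)"
  using producers[of q] consumers[of q] by (auto split: if_splits)

lemma count_start: "count (repeat_mset k (mset_set (inp X))) q = (if q \<in> inp X then k else 0)"
  using pWF_finite_inp[OF pw] by simp

lemma consumed_place:
  assumes u: "u \<in> trans X" and q: "q \<in> preset X u"
  shows "q \<in> places X" "q \<notin> outp X" "postset X q = {u}"
proof -
  show qp: "q \<in> places X" using preset_trans_places[OF pn u] q by auto
  have uq: "u \<in> postset X q" using q unfolding preset_def postset_def by auto
  then have "card (postset X q) \<noteq> 0" using petri_net_finite_postset[OF pn, of q] by auto
  then have "q \<notin> outp X \<and> card (postset X q) = 1"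
    using card_preset_postset(2)[OF qp] by (auto split: if_splits)
  then show "q \<notin> outp X" "postset X q = {u}"
    using uq by (metis card_1_singletonE singletonD)+
qed

lemma consumed_place_balance:
  assumes eq: "marking_equation X (repeat_mset k (mset_set (inp X))) m x"
    and u: "u \<in> trans X" and q: "q \<in> preset X u"
  shows "(q \<in> inp X \<and> count m q + x u = k)
    \<or> (\<exists>w \<in> trans X. (w, u) \<in> (flow X)\<^sup>+ \<and> count m q + x u = x w)"
proof -
  note qi = consumed_place[OF u q]
  have e: "count m q + x u = count (repeat_mset k (mset_set (inp X))) q + (\<Sum>v \<in> preset X q. x v)"
    using eq qi unfolding marking_equation_def by auto
  show ?thesis
  proof (cases "q \<in> inp X")
    case True
    then have "preset X q = {}"
      using card_preset_postset(1)[OF qi(1)] petri_net_finite_preset[OF pn, of q] by simp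
    then show ?thesis using e True unfolding count_start by simp
  next
    case False
    then obtain w where w: "preset X q = {w}"
      using card_preset_postset(1)[OF qi(1)] by (auto simp: card_1_singleton_iff)
    have "(w, q) \<in> flow X" "(q, u) \<in> flow X" using w q unfolding preset_def by auto
    then have "(w, u) \<in> (flow X)\<^sup>+" by auto
    moreover have "w \<in> trans X" using preset_place_trans[OF pn qi(1)] w by auto
    ultimately show ?thesis using e w False unfolding count_start by auto
  qed
qed

lemma firing_count_bound:
  assumes eq: "marking_equation X (repeat_mset k (mset_set (inp X))) m x"
  shows "u \<in> trans X \<Longrightarrow> x u \<le> k"
proof (induction u rule: wf_induct[OF wf_trancl[OF wf_flow]])
  case (1 u)
  obtain q where q: "q \<in> preset X u" using pWF_preset_nonempty[OF pw 1(2)] by blast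
  from consumed_place_balance[OF eq 1(2) q] show ?case
  proof (elim disjE bexE conjE)
    fix w assume "w \<in> trans X" "(w, u) \<in> (flow X)\<^sup>+" "count m q + x u = x w"
    moreover from this(1,2) have "x w \<le> k" using 1(1) by blast
    ultimately show ?case by linarith
  qed linarith
qed

lemma minimal_unfinished_enabled:
  assumes eq: "marking_equation X (repeat_mset k (mset_set (inp X))) (m + repeat_mset k' (mset_set (outp X))) x"
    and z: "z \<in> trans X" "x z < k"
    and finished_before: "\<And>w. w \<in> trans X \<Longrightarrow> (w, z) \<in> (flow X)\<^sup>+ \<Longrightarrow> k \<le> x w"
  shows "mset_set (preset X z) \<subseteq># m"
proof (rule mset_subset_eqI)
  fix q
  show "count (mset_set (preset X z)) q \<le> count m q"
  proof (cases "q \<in> preset X z")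
    case True
    then have no_output: "count (m + repeat_mset k' (mset_set (outp X))) q = count m q"
      using consumed_place(2)[OF z(1)] pWF_finite_outp[OF pw] by simp
    have "count m q + x z \<ge> k"
      using consumed_place_balance[OF eq z(1) True] unfolding no_output
    proof (elim disjE bexE conjE)
      fix w assume "w \<in> trans X" "(w, z) \<in> (flow X)\<^sup>+" "count m q + x z = x w"
      then show ?thesis using finished_before[of w] by simp
    qed simp
    then have "count m q \<ge> 1" using z(2) by linarith
    then show ?thesis using True petri_net_finite_preset[OF pn, of z] by simp
  qed (simp add: petri_net_finite_preset[OF pn])
qed

lemma completed_marking:
  assumes eq: "marking_equation X (repeat_mset k (mset_set (inp X))) (m + repeat_mset k' (mset_set (outp X))) x"
    and all_fired: "\<forall>u \<in> trans X. x u = k" and mk: "marking X m" and kk: "k' \<le> k"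
  shows "m = repeat_mset (k - k') (mset_set (outp X))"
proof (rule multiset_eqI)
  fix q
  have fO: "finite (outp X)" using pWF_finite_outp[OF pw] .
  show "count m q = count (repeat_mset (k - k') (mset_set (outp X))) q"
  proof (cases "q \<in> places X")
    case True
    have sum_k: "(\<Sum>v \<in> A. x v) = card A * k" if "A \<subseteq> trans X" for A
      using all_fired that by (simp add: subset_iff)
    have "count (m + repeat_mset k' (mset_set (outp X))) q + (\<Sum>v \<in> postset X q. x v)
        = count (repeat_mset k (mset_set (inp X))) q + (\<Sum>v \<in> preset X q. x v)"
      using eq True unfolding marking_equation_def by blast
    then have "count (m + repeat_mset k' (mset_set (outp X))) q + card (postset X q) * k
        = (if q \<in> inp X then k else 0) + card (preset X q) * k"
      unfolding count_start sum_k[OF preset_place_trans[OF pn True]]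
        sum_k[OF postset_place_trans[OF pn True]] .
    then show ?thesis using fO kk unfolding card_preset_postset[OF True]
      by (auto split: if_splits)
  next
    case False
    then have "q \<notin># m" "q \<notin> outp X" using mk pw unfolding marking_def pWF_def by auto
    then show ?thesis using fO by (simp add: not_in_iff)
  qed
qed

text \<open>Completion of a run: as long as some transition fired fewer than \<open>k\<close> times, a
  flow-minimal such transition is enabled and can be fired.\<close>

lemma and_completion:
  assumes "k' \<le> k"
  shows "marking_equation X (repeat_mset k (mset_set (inp X))) (m + repeat_mset k' (mset_set (outp X))) x
    \<Longrightarrow> \<forall>u \<in> trans X. x u \<le> k \<Longrightarrow> marking X m
    \<Longrightarrow> reach X m (repeat_mset (k - k') (mset_set (outp X)))"
proof (induction "\<Sum>u \<in> trans X. k - x u" arbitrary: m x rule: less_induct)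
  case less
  show ?case
  proof (cases "\<forall>u \<in> trans X. x u = k")
    case True
    then show ?thesis using completed_marking[OF less(2) True less(4) assms] by (simp add: reach_def)
  next
    case False
    define S where "S = {u \<in> trans X. x u < k}"
    have "S \<noteq> {}" using False less(3) unfolding S_def by force
    then obtain z where zS: "z \<in> S" and zmin: "\<And>y. (y, z) \<in> (flow X)\<^sup>+ \<Longrightarrow> y \<notin> S"
      using wfE_min[OF wf_trancl[OF wf_flow]] by (metis ex_in_conv)
    have zt: "z \<in> trans X" and zk: "x z < k" using zS unfolding S_def by auto
    have enabled: "mset_set (preset X z) \<subseteq># m"
    proof (rule minimal_unfinished_enabled[OF less(2) zt zk])
      fix w assume w: "w \<in> trans X" "(w, z) \<in> (flow X)\<^sup>+"
      then have "w \<notin> S" by (intro zmin)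
      then show "k \<le> x w" using w(1) unfolding S_def by simp
    qed
    define m2 where "m2 = m - mset_set (preset X z) + mset_set (postset X z)"
    have step: "m2 + mset_set (preset X z) = m + mset_set (postset X z)"
      unfolding m2_def using enabled by (metis add.assoc add.commute subset_mset.diff_add)
    have fires: "fire X m m2" by (rule fire_intro[OF zt enabled step])
    define x2 where "x2 = x(z := Suc (x z))"
    have eq2: "marking_equation X (repeat_mset k (mset_set (inp X)))
        (m2 + repeat_mset k' (mset_set (outp X))) x2"
      unfolding x2_def
      by (rule marking_equation_fire[OF pn zt _ less(2)]) (use step in \<open>simp add: add_ac\<close>)
    have bound2: "\<forall>u \<in> trans X. x2 u \<le> k" using less(3) zk unfolding x2_def by auto
    have "set_mset m2 \<subseteq> set_mset m \<union> postset X z"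
      unfolding m2_def using petri_net_finite_postset[OF pn, of z] by (auto dest: in_diffD)
    then have mk2: "marking X m2"
      using less(4) postset_trans_places[OF pn zt] unfolding marking_def by blast
    have "finite (trans X)" using pn unfolding petri_net_def by simp
    then have "(\<Sum>u \<in> trans X. k - x2 u) < (\<Sum>u \<in> trans X. k - x u)"
      unfolding x2_def using zt zk by (rule sum_missing_decreases)
    then have "reach X m2 (repeat_mset (k - k') (mset_set (outp X)))"
      using less(1) eq2 bound2 mk2 by blast
    then show ?thesis using fires by (meson fire_reach reach_trans)
  qed
qed

theorem sub_sound: "sub_sound_p X"
  unfolding sub_sound_p_def
proof (intro allI impI)
  fix k k' m'
  assume "k' \<le> k" and mk: "marking X m'"
    and r: "reach X (repeat_mset k (mset_set (inp X))) (m' + repeat_mset k' (mset_set (outp X)))"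
  obtain x where eq: "marking_equation X (repeat_mset k (mset_set (inp X)))
      (m' + repeat_mset k' (mset_set (outp X))) x"
    using marking_equation_reach[OF pn r] by blast
  show "reach X m' (repeat_mset (k - k') (mset_set (outp X)))"
    using and_completion[OF \<open>k' \<le> k\<close> eq _ mk] firing_count_bound[OF eq] by blast
qed

end

lemma pc_simps [simp]:
  "places (pc N) = Inl ` places N \<union> {Inr False, Inr True}"
  "trans (pc N) = Inl ` trans N"
  "inp (pc N) = {Inr False}"
  "outp (pc N) = {Inr True}"
  "flow (pc N) = map_prod Inl Inl ` flow N \<union> {(Inr False, Inl t) | t. t \<in> inp N}
                   \<union> {(Inl t, Inr True) | t. t \<in> outp N}"
  unfolding pc_def by simp_all

lemma pc_nodes: "nodes (pc N) = Inl ` nodes N \<union> {Inr False, Inr True}"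
  unfolding nodes_def by auto

lemma pc_preset_Inl:
  "preset (pc N) (Inl x) = Inl ` preset N x \<union> (if x \<in> inp N then {Inr False} else {})"
  unfolding preset_def by auto

lemma pc_postset_Inl:
  "postset (pc N) (Inl x) = Inl ` postset N x \<union> (if x \<in> outp N then {Inr True} else {})"
  unfolding postset_def by auto

lemma pc_preset_Inr: "preset (pc N) (Inr False) = {}" "preset (pc N) (Inr True) = Inl ` outp N"
  unfolding preset_def by auto

lemma pc_postset_Inr: "postset (pc N) (Inr True) = {}" "postset (pc N) (Inr False) = Inl ` inp N"
  unfolding postset_def by auto

lemma rtrancl_map_prod: "(a, b) \<in> r\<^sup>* \<Longrightarrow> (f a, f b) \<in> (map_prod f f ` r)\<^sup>*"
proof (induction rule: rtrancl_induct)
  case (step y z)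
  then have "(f y, f z) \<in> map_prod f f ` r" by force
  with step show ?case by (meson rtrancl.rtrancl_into_rtrancl)
qed simp

lemma pc_pWF:
  assumes tw: "tWF N" shows "pWF (pc N)"
proof -
  have io: "inp N \<subseteq> trans N" "outp N \<subseteq> trans N" "inp N \<noteq> {}"
    using tw unfolding tWF_def wf_conn_def by auto
  have pn: "petri_net (pc N)"
    using tWF_petri_net[OF tw] io(1,2) unfolding petri_net_def by auto
  let ?F = "flow (pc N)"
  have lift: "(a, b) \<in> (flow N)\<^sup>* \<Longrightarrow> (Inl a, Inl b) \<in> ?F\<^sup>*" for a b
    using rtrancl_mono[of "map_prod Inl Inl ` flow N" ?F] rtrancl_map_prod[of a b "flow N" Inl]
    by auto
  have from_input: "(Inr False, Inl y) \<in> ?F\<^sup>*" if y: "y \<in> nodes N" for y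
  proof -
    obtain i where i: "i \<in> inp N" "(i, y) \<in> (flow N)\<^sup>*"
      using tw y unfolding tWF_def wf_conn_def by blast
    have "(Inr False, Inl i) \<in> ?F" using i by auto
    then show ?thesis using lift[OF i(2)] by (meson converse_rtrancl_into_rtrancl)
  qed
  have to_output: "(Inl y, Inr True) \<in> ?F\<^sup>*" if y: "y \<in> nodes N" for y
  proof -
    obtain q where q: "q \<in> outp N" "(y, q) \<in> (flow N)\<^sup>*"
      using tw y unfolding tWF_def wf_conn_def by blast
    have "(Inl q, Inr True) \<in> ?F" using q by auto
    then show ?thesis using lift[OF q(2)] by (meson rtrancl.rtrancl_into_rtrancl)
  qed
  obtain i0 where "i0 \<in> inp N" using io by blast
  then have "i0 \<in> nodes N" using io unfolding nodes_def by auto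
  then have "(Inr False, Inr True) \<in> ?F\<^sup>*"
    using from_input to_output by (meson rtrancl_trans)
  then have "wf_conn (pc N)" unfolding wf_conn_def
    using from_input to_output by (auto simp: pc_nodes)
  then show ?thesis unfolding pWF_def using pn by simp
qed

lemma wf_flow_pc:
  fixes N :: "'n net"
  assumes "wf (flow N)" shows "wf (flow (pc N))"
proof -
  let ?R0 = "map_prod Inl Inl ` flow N :: (('n + bool) \<times> ('n + bool)) set"
  let ?E1 = "{(Inr False, Inl t) | t. t \<in> inp N} :: (('n + bool) \<times> ('n + bool)) set"
  let ?E2 = "{(Inl t, Inr True) | t. t \<in> outp N} :: (('n + bool) \<times> ('n + bool)) set"
  have "wf ?R0" using assms by (rule wf_map_prod_image) simp
  moreover have "wf ?E1"
    by (rule wf_subset[OF wf_measure[of "\<lambda>x. case x of Inl _ \<Rightarrow> 1 | Inr _ \<Rightarrow> (0::nat)"]]) auto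
  moreover have "wf ?E2"
    by (rule wf_subset[OF wf_measure[of "\<lambda>x. case x of Inl _ \<Rightarrow> 0 | Inr _ \<Rightarrow> (1::nat)"]]) auto
  ultimately have "wf ((?E1 \<union> ?R0) \<union> ?E2)" by (intro wf_Un) auto
  moreover have "flow (pc N) = (?E1 \<union> ?R0) \<union> ?E2" by auto
  ultimately show ?thesis by simp
qed

lemma pAND_acyclic_and_net:
  assumes N: "N \<in> pAND" shows "acyclic_and_net N"
proof
  show pw: "pWF N" using N unfolding pAND_def by simp
  show "wf (flow N)" using N petri_net_finite_flow[OF pWF_petri_net[OF pw]]
    unfolding pAND_def AND_net_def by (simp add: finite_acyclic_wf)
  fix q assume q: "q \<in> places N"
  show "(if q \<in> inp N then 1 else 0) + card (preset N q) = 1"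
    "(if q \<in> outp N then 1 else 0) + card (postset N q) = 1"
    using N q unfolding pAND_def AND_net_def by auto
qed

text \<open>In the completion of a one-input one-output tAND net, the two new places have one
  consumer resp. one producer, and the old places are neither inputs nor outputs.\<close>

lemma tAND11_pc_acyclic_and_net:
  assumes "N \<in> tAND11" shows "acyclic_and_net (pc N)"
proof -
  have an: "AND_net N" and tw: "tWF N" and ci: "card (inp N) = 1" and co: "card (outp N) = 1"
    using assms unfolding tAND11_def by auto
  have pn: "petri_net N" using tw by (rule tWF_petri_net)
  have old_place: "q0 \<notin> inp N" "q0 \<notin> outp N" if "q0 \<in> places N" for q0
    using that tw pn unfolding tWF_def petri_net_def by auto
  have counts: "(if q \<in> inp (pc N) then 1 else 0) + card (preset (pc N) q) = 1
      \<and> (if q \<in> outp (pc N) then 1 else 0) + card (postset (pc N) q) = 1"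
    if q: "q \<in> places (pc N)" for q
  proof -
    consider (old) q0 where "q = Inl q0" "q0 \<in> places N"
      | (start) "q = Inr False" | (final) "q = Inr True"
      using q by auto
    then show ?thesis
    proof cases
      case old
      then show ?thesis using an old_place[OF old(2)] unfolding AND_net_def
        by (auto simp: pc_preset_Inl pc_postset_Inl card_image)
    qed (use ci co in \<open>simp_all add: pc_preset_Inr pc_postset_Inr card_image\<close>)
  qed
  show ?thesis
  proof
    show "pWF (pc N)" using pc_pWF[OF tw] .
    show "wf (flow (pc N))"
      using an petri_net_finite_flow[OF pn] unfolding AND_net_def
      by (intro wf_flow_pc) (simp add: finite_acyclic_wf)
  qed (use counts in blast)+
qed

lemma pOR11_state_machine: "N \<in> pOR11 \<Longrightarrow> state_machine N"
  unfolding pOR11_def OR_net_def state_machine_def pWF_def petri_net_def by auto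

text \<open>Completing a tOR net gives every input (output) transition the new input (output)
  place as its unique input (output) place.\<close>

lemma tOR_pc_state_machine:
  fixes N :: "'n net"
  assumes "N \<in> tOR" shows "state_machine (pc N)"
  unfolding state_machine_def
proof
  fix u assume "u \<in> trans (pc N)"
  then obtain u0 where u0: "u = Inl u0" "u0 \<in> trans N" by auto
  have or: "OR_net N" and pn: "petri_net N" using assms tWF_petri_net unfolding tOR_def by auto
  have "card (preset (pc N) u) = 1"
  proof (cases "u0 \<in> inp N")
    case True
    then have "preset N u0 = {}"
      using or u0 petri_net_finite_preset[OF pn, of u0] unfolding OR_net_def by auto
    then show ?thesis using True u0 by (simp add: pc_preset_Inl)
  next
    case False
    then show ?thesis using or u0 unfolding OR_net_def by (auto simp: pc_preset_Inl card_image)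
  qed
  moreover have "card (postset (pc N) u) = 1"
  proof (cases "u0 \<in> outp N")
    case True
    then have "postset N u0 = {}"
      using or u0 petri_net_finite_postset[OF pn, of u0] unfolding OR_net_def by auto
    then show ?thesis using True u0 by (simp add: pc_postset_Inl)
  next
    case False
    then show ?thesis using or u0 unfolding OR_net_def by (auto simp: pc_postset_Inl card_image)
  qed
  ultimately show "card (preset (pc N) u) = 1 \<and> card (postset (pc N) u) = 1" by simp
qed

lemma base_sub_sound:
  fixes N :: "'n net"
  assumes "N \<in> pAND \<union> tAND11 \<union> pOR11 \<union> tOR"
  shows "sub_sound N"
  using assms
proof (elim UnE)
  assume N: "N \<in> pAND"
  then have "pWF N" unfolding pAND_def by simp
  moreover have "sub_sound_p N" using acyclic_and_net.sub_sound[OF pAND_acyclic_and_net[OF N]] .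
  ultimately show ?thesis unfolding sub_sound_def by simp
next
  assume N: "N \<in> tAND11"
  then have "tWF N" unfolding tAND11_def by simp
  moreover have "sub_sound_p (pc N)"
    using acyclic_and_net.sub_sound[OF tAND11_pc_acyclic_and_net[OF N]] .
  ultimately show ?thesis unfolding sub_sound_def by simp
next
  assume N: "N \<in> pOR11"
  then obtain i o' where io: "inp N = {i}" "outp N = {o'}" and pw: "pWF N"
    unfolding pOR11_def by (auto simp: card_1_singleton_iff)
  have "sub_sound_p N" using state_machine_sub_sound[OF pw pOR11_state_machine[OF N] io] .
  then show ?thesis using pw unfolding sub_sound_def by simp
next
  assume N: "N \<in> tOR"
  then have tw: "tWF N" unfolding tOR_def by simp
  have "sub_sound_p (pc N)"
    by (rule state_machine_sub_sound[OF pc_pWF[OF tw] tOR_pc_state_machine[OF N]]) simp_all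
  then show ?thesis using tw unfolding sub_sound_def by simp
qed

locale place_subst =
  fixes N M :: "'n net" and p :: 'n
  assumes pw_N: "pWF N" and pw_M: "pWF M" and disj: "nodes N \<inter> nodes M = {}"
    and p: "p \<in> places N" and sound_N: "sub_sound_p N" and sound_M: "sub_sound_p M"
begin

abbreviation "N' \<equiv> subst_place N p M"

lemma pn_N: "petri_net N" using pw_N by (rule pWF_petri_net)
lemma pn_M: "petri_net M" using pw_M by (rule pWF_petri_net)

lemma io_M: "inp M \<subseteq> places M" "outp M \<subseteq> places M" using pw_M unfolding pWF_def by auto
lemma io_N: "inp N \<subseteq> places N" "outp N \<subseteq> places N" using pw_N unfolding pWF_def by auto

lemma finite_pre_post:
  "finite (preset N u)" "finite (postset N u)" "finite (preset M u)" "finite (postset M u)"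
  by (simp_all add: petri_net_finite_preset[OF pn_N] petri_net_finite_postset[OF pn_N]
      petri_net_finite_preset[OF pn_M] petri_net_finite_postset[OF pn_M])

lemma finite_io: "finite (inp M)" "finite (outp M)" "finite (inp N)" "finite (outp N)"
  using pWF_finite_inp pWF_finite_outp pw_N pw_M by auto

lemma count_io:
  "count (mset_set (inp M)) q = (if q \<in> inp M then 1 else 0)"
  "count (mset_set (outp M)) q = (if q \<in> outp M then 1 else 0)"
  "count (mset_set (inp N)) q = (if q \<in> inp N then 1 else 0)"
  "count (mset_set (outp N)) q = (if q \<in> outp N then 1 else 0)"
  using finite_io by simp_all

lemma in_nodes: "x \<in> places N \<Longrightarrow> x \<in> nodes N" "x \<in> trans N \<Longrightarrow> x \<in> nodes N"
  "x \<in> places M \<Longrightarrow> x \<in> nodes M" "x \<in> trans M \<Longrightarrow> x \<in> nodes M"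
  unfolding nodes_def by auto

lemma disjoint_nodes: "x \<in> nodes N \<Longrightarrow> x \<notin> nodes M" using disj by auto

lemma disjoint_places: "places N \<inter> places M = {}" using disj unfolding nodes_def by auto
lemma p_not_inner: "p \<notin> nodes M" using p disj unfolding nodes_def by auto

lemma subst_simps:
  "places N' = (places N - {p}) \<union> places M" "trans N' = trans N \<union> trans M"
  "flow N' = {e \<in> flow N. fst e \<noteq> p \<and> snd e \<noteq> p} \<union> flow M
            \<union> {(t, p') | t p'. t \<in> preset N p \<and> p' \<in> inp M}
            \<union> {(p', t) | p' t. p' \<in> outp M \<and> t \<in> postset N p}"
  "inp N' = (if p \<in> inp N then (inp N - {p}) \<union> inp M else inp N)"
  "outp N' = (if p \<in> outp N then (outp N - {p}) \<union> outp M else outp N)"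
  unfolding subst_place_def by simp_all

lemma preset_outer:
  assumes u: "u \<in> trans N"
  shows "preset N' u = (preset N u - {p}) \<union> (if p \<in> preset N u then outp M else {})"
proof -
  have "u \<in> nodes N" "u \<noteq> p" using u p pn_N in_nodes unfolding petri_net_def by auto
  then show ?thesis
    using disjoint_nodes io_M flow_in_nodes[OF pn_M] in_nodes
    unfolding preset_def postset_def subst_simps by (auto, blast+)
qed

lemma postset_outer:
  assumes u: "u \<in> trans N"
  shows "postset N' u = (postset N u - {p}) \<union> (if p \<in> postset N u then inp M else {})"
proof -
  have "u \<in> nodes N" "u \<noteq> p" using u p pn_N in_nodes unfolding petri_net_def by auto
  then show ?thesis
    using disjoint_nodes io_M flow_in_nodes[OF pn_M] in_nodes
    unfolding preset_def postset_def subst_simps by (auto, blast+)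
qed

lemma pre_postset_inner:
  assumes u: "u \<in> trans M"
  shows "preset N' u = preset M u" "postset N' u = postset M u"
proof -
  have "u \<notin> inp M" "u \<notin> outp M" using u io_M pn_M unfolding petri_net_def by auto
  moreover have "postset N p \<subseteq> nodes N" "preset N p \<subseteq> nodes N"
    using flow_in_nodes[OF pn_N] unfolding postset_def preset_def by auto
  moreover have "u \<in> nodes M" using u in_nodes by simp
  ultimately show "preset N' u = preset M u" "postset N' u = postset M u"
    using disjoint_nodes flow_in_nodes[OF pn_N]
    unfolding preset_def postset_def subst_simps by auto
qed

lemma outer_avoids_inner:
  "u \<in> trans N \<Longrightarrow> q \<in> places M \<Longrightarrow> q \<notin> preset N u \<and> q \<notin> postset N u \<and> q \<noteq> p"
  using p_not_inner preset_trans_places[OF pn_N] postset_trans_places[OF pn_N] in_nodes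
    disjoint_nodes by blast

lemma count_preset_outer: "u \<in> trans N \<Longrightarrow> count (mset_set (preset N' u)) q
    = (if q \<in> preset N u \<and> q \<noteq> p then 1 else 0) + (if p \<in> preset N u \<and> q \<in> outp M then 1 else 0)"
  using outer_avoids_inner[of u q] io_M finite_io finite_pre_post unfolding preset_outer by auto

lemma count_postset_outer: "u \<in> trans N \<Longrightarrow> count (mset_set (postset N' u)) q
    = (if q \<in> postset N u \<and> q \<noteq> p then 1 else 0) + (if p \<in> postset N u \<and> q \<in> inp M then 1 else 0)"
  using outer_avoids_inner[of u q] io_M finite_io finite_pre_post unfolding postset_outer by auto

lemma fire_inner: "fire M a b \<Longrightarrow> fire N' a b"
proof (erule fire_elim)
  fix u assume u: "u \<in> trans M" "mset_set (preset M u) \<subseteq># a"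
    "b + mset_set (preset M u) = a + mset_set (postset M u)"
  show "fire N' a b"
    by (rule fire_intro[of u]) (use u pre_postset_inner[OF u(1)] in \<open>auto simp: subst_simps\<close>)
qed

lemma reach_inner: "reach M a b \<Longrightarrow> reach N' a b"
  using reach_simulation[of "fire M" a b N' "\<lambda>m. m"] fire_inner fire_reach
  unfolding reach_def[of M] by blast

text \<open>Runs of \<open>N\<close> are simulated in \<open>N'\<close> by replacing every token on \<open>p\<close> by a token on each
  output place of \<open>M\<close>; a token put on \<open>p\<close> is processed by a run of the sound net \<open>M\<close>.\<close>

definition expand :: "'n multiset \<Rightarrow> 'n multiset" where
  "expand z = filter_mset (\<lambda>q. q \<noteq> p) z + repeat_mset (count z p) (mset_set (outp M))"

lemma expand_fire:
  assumes f: "fire N y z" shows "reach N' (expand y) (expand z)"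
proof -
  obtain u where u: "u \<in> trans N" "mset_set (preset N u) \<subseteq># y"
    "z + mset_set (preset N u) = y + mset_set (postset N u)" using f by (auto elim: fire_elim)
  define b :: nat where "b = (if p \<in> postset N u then 1 else 0)"
  have balance: "count z q + (if q \<in> preset N u then 1 else 0)
      = count y q + (if q \<in> postset N u then 1 else 0)" for q
    using arg_cong[OF u(3), of "\<lambda>m. count m q"]
    unfolding count_union count_mset_set_if[OF finite_pre_post(1)] count_mset_set_if[OF finite_pre_post(2)] .
  have enabled: "(if q \<in> preset N u then 1 else 0) \<le> count y q" for q
    using u(2) unfolding subseteq_mset_def count_mset_set_if[OF finite_pre_post(1)] by metis
  have zp: "count z p \<ge> b" using balance[of p] enabled[of p] unfolding b_def by (auto split: if_splits)
  define w0 where "w0 = filter_mset (\<lambda>q. q \<noteq> p) z + repeat_mset (count z p - b) (mset_set (outp M))"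
  have uN': "u \<in> trans N'" using u(1) by (simp add: subst_simps)
  have avoid: "q \<in> outp M \<or> q \<in> inp M \<Longrightarrow> q \<notin> preset N u \<and> q \<notin> postset N u \<and> q \<noteq> p" for q
    using outer_avoids_inner[OF u(1)] io_M by blast
  have fire_u: "fire N' (expand y) (w0 + repeat_mset b (mset_set (inp M)))"
  proof (rule fire_intro[OF uN'])
    show "mset_set (preset N' u) \<subseteq># expand y"
    proof (rule mset_subset_eqI)
      fix q
      show "count (mset_set (preset N' u)) q \<le> count (expand y) q"
        using enabled[of q] enabled[of p] avoid[of q] unfolding count_preset_outer[OF u(1)] expand_def
        by (auto simp: count_io Suc_le_eq split: if_splits)
    qed
    show "w0 + repeat_mset b (mset_set (inp M)) + mset_set (preset N' u) = expand y + mset_set (postset N' u)"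
    proof (rule multiset_eqI)
      fix q
      show "count (w0 + repeat_mset b (mset_set (inp M)) + mset_set (preset N' u)) q =
            count (expand y + mset_set (postset N' u)) q"
        using balance[of q] balance[of p] enabled[of p] zp avoid[of q]
        unfolding count_preset_outer[OF u(1)] count_postset_outer[OF u(1)] expand_def w0_def
          count_union count_filter_mset count_repeat_mset count_io b_def
        by (auto split: if_splits)
    qed
  qed
  have "reach N' (w0 + repeat_mset b (mset_set (inp M))) (expand z)"
  proof (cases "b = 0")
    case True then show ?thesis unfolding w0_def expand_def by (simp add: reach_def)
  next
    case False
    then have b1: "b = 1" unfolding b_def by (simp split: if_splits)
    have "reach N' (mset_set (inp M) + w0) (mset_set (outp M) + w0)"
      using reach_mono[OF reach_inner[OF sub_sound_single_run[OF pw_M sound_M]]] .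
    moreover obtain c where "count z p = Suc c" using zp b1 by (metis Suc_le_D One_nat_def)
    then have "expand z = mset_set (outp M) + w0" unfolding expand_def w0_def b1 by (simp add: add_ac)
    ultimately show ?thesis using b1 by (simp add: add_ac)
  qed
  with fire_u show ?thesis by (meson fire_reach reach_trans)
qed

lemma expand_reach: "reach N y z \<Longrightarrow> reach N' (expand y) (expand z)"
  using reach_simulation[of "fire N" y z N' expand] expand_fire unfolding reach_def[of N] by blast

definition outer :: "'n multiset \<Rightarrow> 'n multiset" where
  "outer m = filter_mset (\<lambda>q. q \<notin> places M) m"

definition inner :: "'n multiset \<Rightarrow> 'n multiset" where
  "inner m = filter_mset (\<lambda>q. q \<in> places M) m"

lemma count_outer [simp]: "count (outer m) q = (if q \<in> places M then 0 else count m q)"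
  unfolding outer_def by simp

lemma count_inner [simp]: "count (inner m) q = (if q \<in> places M then count m q else 0)"
  unfolding inner_def by simp

text \<open>The projections onto \<open>N\<close> and onto \<open>M\<close> of a marking \<open>m\<close> of \<open>N'\<close>, when \<open>c\<close> tokens
  are inside \<open>M\<close> (represented on \<open>p\<close>) resp. have been delivered by \<open>M\<close>.\<close>

abbreviation projected_N :: "'n multiset \<Rightarrow> nat \<Rightarrow> 'n multiset" where
  "projected_N m c \<equiv> outer m + replicate_mset c p"

abbreviation projected_M :: "'n multiset \<Rightarrow> nat \<Rightarrow> 'n multiset" where
  "projected_M m c \<equiv> inner m + repeat_mset c (mset_set (outp M))"

text \<open>The projection invariant of a run of \<open>N'\<close> started with \<open>k\<close> tokens per input place:
  there are a run of \<open>N\<close> and a run of \<open>M\<close> such that \<open>M\<close> received \<open>J\<close> and delivered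
  \<open>J'\<close> tokens, and the \<open>J - J'\<close> tokens still inside \<open>M\<close> are represented by tokens on \<open>p\<close>.\<close>

definition projects :: "nat \<Rightarrow> 'n multiset \<Rightarrow> bool" where
  "projects k m \<longleftrightarrow> (\<exists>J J'. J' \<le> J
     \<and> reach N (repeat_mset k (mset_set (inp N))) (projected_N m (J - J'))
     \<and> reach M (repeat_mset J (mset_set (inp M))) (projected_M m J'))"

lemma projects_start: "projects k (repeat_mset k (mset_set (inp N')))"
proof (cases "p \<in> inp N")
  case True
  have fI: "finite (inp N - {p} \<union> inp M)" using finite_io by simp
  have "outer (repeat_mset k (mset_set (inp N'))) + replicate_mset (k - 0) p
      = repeat_mset k (mset_set (inp N))"
    by (rule multiset_eqI) (use True io_N io_M disjoint_places fI in
        \<open>auto simp: subst_simps count_io count_mset_set_if[OF fI]\<close>)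
  moreover have "inner (repeat_mset k (mset_set (inp N'))) + repeat_mset 0 (mset_set (outp M))
      = repeat_mset k (mset_set (inp M))"
    by (rule multiset_eqI) (use True io_N io_M disjoint_places fI in
        \<open>auto simp: subst_simps count_io count_mset_set_if[OF fI]\<close>)
  ultimately show ?thesis unfolding projects_def by (metis le0 reach_def rtranclp.rtrancl_refl)
next
  case False
  have "outer (repeat_mset k (mset_set (inp N'))) + replicate_mset (0 - 0) p
      = repeat_mset k (mset_set (inp N))"
    by (rule multiset_eqI) (use False io_N disjoint_places in \<open>auto simp: subst_simps count_io\<close>)
  moreover have "inner (repeat_mset k (mset_set (inp N'))) + repeat_mset 0 (mset_set (outp M))
      = repeat_mset 0 (mset_set (inp M))"
    by (rule multiset_eqI) (use False io_N disjoint_places in \<open>auto simp: subst_simps count_io\<close>)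
  ultimately show ?thesis unfolding projects_def by (metis le0 reach_def rtranclp.rtrancl_refl)
qed

lemma projects_inner_fire:
  assumes proj: "projects k m" and u: "u \<in> trans M"
    and pre_u: "mset_set (preset N' u) \<subseteq># m"
    and step: "m2 + mset_set (preset N' u) = m + mset_set (postset N' u)"
  shows "projects k m2"
proof -
  obtain J J' where IH: "J' \<le> J" "reach N (repeat_mset k (mset_set (inp N))) (projected_N m (J - J'))"
    "reach M (repeat_mset J (mset_set (inp M))) (projected_M m J')"
    using proj unfolding projects_def by blast
  have pp: "preset N' u = preset M u" "postset N' u = postset M u" using pre_postset_inner[OF u] by auto
  have pl: "preset M u \<subseteq> places M" "postset M u \<subseteq> places M"
    using preset_trans_places[OF pn_M u] postset_trans_places[OF pn_M u] by auto
  have balance: "count m2 q + count (mset_set (preset M u)) q = count m q + count (mset_set (postset M u)) q" for q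
    using arg_cong[OF step, of "\<lambda>m. count m q"] unfolding pp by simp
  have enabled: "count (mset_set (preset M u)) q \<le> count m q" for q
    using pre_u unfolding pp subseteq_mset_def by blast
  have "outer m2 = outer m"
  proof (rule multiset_eqI)
    fix q show "count (outer m2) q = count (outer m) q"
      using balance[of q] pl
        unfolding count_mset_set_if[OF finite_pre_post(3)] count_mset_set_if[OF finite_pre_post(4)]
        by (auto split: if_splits)
  qed
  moreover have "fire M (projected_M m J') (projected_M m2 J')"
  proof (rule fire_intro[OF u])
    show "mset_set (preset M u) \<subseteq># projected_M m J'"
    proof (rule mset_subset_eqI)
      fix q show "count (mset_set (preset M u)) q \<le> count (projected_M m J') q"
        using enabled[of q] pl unfolding count_mset_set_if[OF finite_pre_post(3)]
        by (auto simp: Suc_le_eq split: if_splits)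
    qed
    show "projected_M m2 J' + mset_set (preset M u) =
          projected_M m J' + mset_set (postset M u)"
    proof (rule multiset_eqI)
      fix q show "count (projected_M m2 J' + mset_set (preset M u)) q =
          count (projected_M m J' + mset_set (postset M u)) q"
        using balance[of q] pl unfolding count_union
          count_mset_set_if[OF finite_pre_post(3)] count_mset_set_if[OF finite_pre_post(4)]
        by (auto split: if_splits)
    qed
  qed
  ultimately show ?thesis using IH unfolding projects_def by (metis reach_fire_trans)
qed

text \<open>When a transition of \<open>N\<close> consumes from \<open>p\<close>, i.e. from the outputs of \<open>M\<close>, then \<open>M\<close>
  must have received more tokens than it delivered before (sub-soundness of \<open>M\<close>).\<close>

lemma outer_fire_inside:
  assumes u: "u \<in> trans N" and pre_u: "mset_set (preset N' u) \<subseteq># m"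
    and JJ: "J' \<le> J"
    and run_M: "reach M (repeat_mset J (mset_set (inp M))) (projected_M m J')"
  shows "J' + (if p \<in> preset N u then 1 else 0) \<le> J"
proof (cases "p \<in> preset N u")
  case True
  have outputs_marked: "mset_set (outp M) \<subseteq># inner m"
  proof (rule mset_subset_eqI)
    fix q
    have "count (mset_set (preset N' u)) q \<le> count m q" using pre_u by (simp add: subseteq_mset_def)
    then show "count (mset_set (outp M)) q \<le> count (inner m) q"
      using True io_M outer_avoids_inner[OF u, of q] unfolding count_preset_outer[OF u] count_io by auto
  qed
  have "projected_M m J'
      = (inner m - mset_set (outp M)) + repeat_mset (Suc J') (mset_set (outp M))"
  proof (rule multiset_eqI)
    fix q
    have "count (mset_set (outp M)) q \<le> count (inner m) q"
      using outputs_marked by (simp add: subseteq_mset_def)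
    then show "count (projected_M m J') q =
        count ((inner m - mset_set (outp M)) + repeat_mset (Suc J') (mset_set (outp M))) q"
      by simp
  qed
  moreover have "marking M (inner m - mset_set (outp M))"
    unfolding marking_def inner_def by (auto dest: in_diffD)
  ultimately have "Suc J' \<le> J"
    using sub_sound_no_overproduction[OF pw_M sound_M] run_M by metis
  then show ?thesis using True by simp
qed (use JJ in simp)

text \<open>A transition of \<open>N\<close> fires in the projection onto \<open>N\<close>, where the tokens of the
  outputs of \<open>M\<close> that it consumes come from \<open>p\<close>.\<close>

lemma outer_fire_enabled:
  assumes u: "u \<in> trans N" and pre_u: "mset_set (preset N' u) \<subseteq># m"
    and inside: "J' + (if p \<in> preset N u then 1 else 0) \<le> J"
  shows "mset_set (preset N u) \<subseteq># projected_N m (J - J')"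
proof (rule mset_subset_eqI)
  have enabled: "count (mset_set (preset N' u)) q \<le> count m q" for q
    using pre_u unfolding subseteq_mset_def by blast
  have p_inner: "p \<notin> places M" using p disjoint_places by auto
  fix q
  show "count (mset_set (preset N u)) q \<le> count (projected_N m (J - J')) q"
  proof (cases "q \<in> preset N u")
    case True
    show ?thesis
    proof (cases "q = p")
      case False
      then have "q \<in># m" "q \<notin> places M"
        using enabled[of q] True outer_avoids_inner[OF u, of q]
        unfolding count_preset_outer[OF u] by (auto intro: count_ge_Suc_in)
      then show ?thesis using True False finite_pre_post(1)[of u] by simp
    qed (use inside True p_inner finite_pre_post(1)[of u] in simp)
  qed (simp add: finite_pre_post)
qed

lemma outer_fire_outer:
  assumes u: "u \<in> trans N" and pre_u: "mset_set (preset N' u) \<subseteq># m"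
    and step: "m2 + mset_set (preset N' u) = m + mset_set (postset N' u)"
    and inside: "J' + (if p \<in> preset N u then 1 else 0) \<le> J"
  shows "fire N (projected_N m (J - J'))
    (projected_N m2 (J + (if p \<in> postset N u then 1 else 0) - (J' + (if p \<in> preset N u then 1 else 0))))"
proof (rule fire_intro[OF u outer_fire_enabled[OF u pre_u inside]])
  have balance: "count m2 q + count (mset_set (preset N' u)) q = count m q + count (mset_set (postset N' u)) q" for q
    using arg_cong[OF step, of "\<lambda>m. count m q"] by simp
  have p_inner: "p \<notin> places M" using p disjoint_places by auto
  show "projected_N m2 (J + (if p \<in> postset N u then 1 else 0) - (J' + (if p \<in> preset N u then 1 else 0)))
      + mset_set (preset N u) = projected_N m (J - J') + mset_set (postset N u)"
  proof (rule multiset_eqI)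
    fix q
    consider "q \<in> places M" | "q = p" | "q \<notin> places M" "q \<noteq> p" by blast
    then show "count (projected_N m2 (J + (if p \<in> postset N u then 1 else 0)
        - (J' + (if p \<in> preset N u then 1 else 0))) + mset_set (preset N u)) q
      = count (projected_N m (J - J') + mset_set (postset N u)) q"
    proof cases
      case 1
      then show ?thesis
        using outer_avoids_inner[OF u 1] finite_pre_post(1,2)[of u] by simp
    next
      case 2
      have "p \<notin> outp M" "p \<notin> inp M" using p_inner io_M by auto
      then have "count m2 p = count m p"
        using balance[of p] unfolding count_preset_outer[OF u] count_postset_outer[OF u] by simp
      then show ?thesis using 2 p_inner inside finite_pre_post(1,2)[of u]
        by (simp split: if_splits)
    next
      case 3
      then have "q \<notin> outp M" "q \<notin> inp M" using io_M by auto
      then show ?thesis using balance[of q] 3 unfolding count_preset_outer[OF u] count_postset_outer[OF u]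
        by (simp add: count_mset_set_if[OF finite_pre_post(1)]
            count_mset_set_if[OF finite_pre_post(2)])
    qed
  qed
qed

lemma outer_fire_inner:
  assumes u: "u \<in> trans N"
    and step: "m2 + mset_set (preset N' u) = m + mset_set (postset N' u)"
  shows "inner m + repeat_mset (if p \<in> postset N u then 1 else 0) (mset_set (inp M))
    = projected_M m2 (if p \<in> preset N u then 1 else 0)"
proof (rule multiset_eqI)
  fix q
  have balance: "count m2 q + count (mset_set (preset N' u)) q = count m q + count (mset_set (postset N' u)) q"
    using arg_cong[OF step, of "\<lambda>m. count m q"] by simp
  show "count (inner m + repeat_mset (if p \<in> postset N u then 1 else 0) (mset_set (inp M))) q
      = count (projected_M m2 (if p \<in> preset N u then 1 else 0)) q"
  proof (cases "q \<in> places M")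
    case True
    have "count m2 q + (if p \<in> preset N u then 1 else 0) * count (mset_set (outp M)) q
        = count m q + (if p \<in> postset N u then 1 else 0) * count (mset_set (inp M)) q"
      using balance outer_avoids_inner[OF u True]
      unfolding count_preset_outer[OF u] count_postset_outer[OF u] count_io by (auto split: if_splits)
    then show ?thesis using True by (simp add: algebra_simps)
  qed (use io_M in \<open>auto simp: count_io\<close>)
qed

lemma projects_outer_fire:
  assumes proj: "projects k m" and u: "u \<in> trans N"
    and pre_u: "mset_set (preset N' u) \<subseteq># m"
    and step: "m2 + mset_set (preset N' u) = m + mset_set (postset N' u)"
  shows "projects k m2"
proof -
  obtain J J' where IH: "J' \<le> J" "reach N (repeat_mset k (mset_set (inp N))) (projected_N m (J - J'))"
    "reach M (repeat_mset J (mset_set (inp M))) (projected_M m J')"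
    using proj unfolding projects_def by blast
  define a :: nat where "a = (if p \<in> preset N u then 1 else 0)"
  define b :: nat where "b = (if p \<in> postset N u then 1 else 0)"
  have inside: "J' + a \<le> J" unfolding a_def by (rule outer_fire_inside[OF u pre_u IH(1,3)])
  have "reach N (repeat_mset k (mset_set (inp N))) (projected_N m2 (J + b - (J' + a)))"
    using IH(2) outer_fire_outer[OF u pre_u step inside[unfolded a_def]]
    unfolding a_def b_def by (rule reach_fire_trans)
  moreover have "reach M (repeat_mset (J + b) (mset_set (inp M))) (projected_M m2 (J' + a))"
  proof -
    have eq: "projected_M m J' + repeat_mset b (mset_set (inp M))
        = projected_M m2 (J' + a)"
      using outer_fire_inner[OF u step] unfolding a_def[symmetric] b_def[symmetric]
      by (simp add: repeat_mset_distrib add_ac)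
    show ?thesis using reach_mono[OF IH(3), of "repeat_mset b (mset_set (inp M))"]
      unfolding eq by (simp add: repeat_mset_distrib)
  qed
  moreover have "J' + a \<le> J + b" using inside by simp
  ultimately show ?thesis unfolding projects_def by blast
qed

lemma projects_reach:
  assumes "reach N' (repeat_mset k (mset_set (inp N'))) m" shows "projects k m"
  using assms unfolding reach_def
proof (induction rule: rtranclp_induct)
  case base then show ?case by (rule projects_start)
next
  case (step m m2)
  then obtain u where u: "u \<in> trans N'" "mset_set (preset N' u) \<subseteq># m"
    "m2 + mset_set (preset N' u) = m + mset_set (postset N' u)" by (auto elim: fire_elim)
  show ?case
  proof (cases "u \<in> trans M")
    case True then show ?thesis using projects_inner_fire step.IH u(2,3) by blast
  next
    case False
    then have "u \<in> trans N" using u(1) by (simp add: subst_simps)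
    then show ?thesis using projects_outer_fire step.IH u(2,3) by blast
  qed
qed

text \<open>The runs finishing the two projections combine to a run of \<open>N'\<close>: first \<open>M\<close> delivers
  the \<open>c\<close> tokens represented on \<open>p\<close>, then the simulation of \<open>N\<close> continues.\<close>

lemma combine_runs:
  assumes mk: "marking N' m'"
    and run_N: "reach N (projected_N m' c) r"
    and run_M: "reach M (inner m') (repeat_mset c (mset_set (outp M)))"
  shows "reach N' m' (expand r)"
proof -
  have "p \<notin># m'" using mk p_not_inner unfolding marking_def subst_simps nodes_def by auto
  then have "expand (projected_N m' c) = outer m' + repeat_mset c (mset_set (outp M))"
    using p_not_inner by (intro multiset_eqI) (auto simp: expand_def count_io nodes_def not_in_iff)
  then have "reach N' (outer m' + repeat_mset c (mset_set (outp M))) (expand r)"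
    using expand_reach[OF run_N] by simp
  moreover have "reach N' m' (outer m' + repeat_mset c (mset_set (outp M)))"
  proof -
    have "m' = inner m' + outer m'" by (rule multiset_eqI) simp
    then show ?thesis using reach_mono[OF reach_inner[OF run_M], of "outer m'"] by (simp add: add_ac)
  qed
  ultimately show ?thesis by (rule reach_trans[rotated])
qed

lemma marking_outer: "marking N' m' \<Longrightarrow> marking N (projected_N m' c)"
  using p unfolding marking_def outer_def subst_simps by auto

lemma marking_inner: "marking M (inner m')"
  unfolding marking_def inner_def by auto

text \<open>Finishing a run of \<open>N'\<close> when \<open>p\<close> is not an output place: the \<open>k'\<close> output tokens lie
  in \<open>N\<close>, and \<open>M\<close> still has to deliver the \<open>J - J'\<close> tokens it holds.\<close>

lemma finish_p_not_output:
  assumes p_out: "p \<notin> outp N" and kk: "k' \<le> k" and mk: "marking N' m'" and JJ: "J' \<le> J"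
    and run_N: "reach N (repeat_mset k (mset_set (inp N)))
      (projected_N (m' + repeat_mset k' (mset_set (outp N'))) (J - J'))"
    and run_M: "reach M (repeat_mset J (mset_set (inp M)))
      (projected_M (m' + repeat_mset k' (mset_set (outp N'))) J')"
  shows "reach N' m' (repeat_mset (k - k') (mset_set (outp N')))"
proof -
  have p_inner: "p \<notin> places M" using p disjoint_places by auto
  have "projected_N (m' + repeat_mset k' (mset_set (outp N'))) (J - J')
      = (projected_N m' (J - J')) + repeat_mset k' (mset_set (outp N))"
    by (rule multiset_eqI) (use p_out io_N disjoint_places in \<open>auto simp: subst_simps count_io\<close>)
  then have "reach N (projected_N m' (J - J')) (repeat_mset (k - k') (mset_set (outp N)))"
    using sound_N kk marking_outer[OF mk] run_N unfolding sub_sound_p_def by metis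
  moreover have "inner (m' + repeat_mset k' (mset_set (outp N'))) = inner m'"
    by (rule multiset_eqI) (use p_out io_N disjoint_places in \<open>auto simp: subst_simps count_io\<close>)
  then have "reach M (inner m') (repeat_mset (J - J') (mset_set (outp M)))"
    using sound_M JJ marking_inner run_M unfolding sub_sound_p_def by metis
  moreover have "expand (repeat_mset (k - k') (mset_set (outp N))) = repeat_mset (k - k') (mset_set (outp N'))"
    by (rule multiset_eqI) (use p_out p_inner in \<open>auto simp: expand_def count_io subst_simps\<close>)
  ultimately show ?thesis using combine_runs[OF mk] by metis
qed

text \<open>Finishing a run of \<open>N'\<close> when \<open>p\<close> is an output place: the \<open>k'\<close> output tokens of \<open>M\<close>
  count as \<open>k'\<close> tokens delivered by \<open>M\<close> and then put on the output \<open>p\<close> of \<open>N\<close>.\<close>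

lemma finish_p_output:
  assumes p_out: "p \<in> outp N" and kk: "k' \<le> k" and mk: "marking N' m'"
    and run_N: "reach N (repeat_mset k (mset_set (inp N)))
      (projected_N (m' + repeat_mset k' (mset_set (outp N'))) (J - J'))"
    and run_M: "reach M (repeat_mset J (mset_set (inp M)))
      (projected_M (m' + repeat_mset k' (mset_set (outp N'))) J')"
  shows "reach N' m' (repeat_mset (k - k') (mset_set (outp N')))"
proof -
  have p_inner: "p \<notin> places M" using p disjoint_places by auto
  have fO: "finite (outp N - {p} \<union> outp M)" using finite_io by simp
  have outp_N': "outp N' = (outp N - {p}) \<union> outp M" using p_out by (simp add: subst_simps)
  have count_outp: "count (mset_set (outp N')) q
      = (if q \<in> outp N \<and> q \<noteq> p then 1 else 0) + (if q \<in> outp M then 1 else 0)" for q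
    using io_N io_M disjoint_places unfolding outp_N' count_mset_set_if[OF fO] by auto
  have inner_m: "projected_M (m' + repeat_mset k' (mset_set (outp N'))) J'
      = projected_M m' (J' + k')"
    by (rule multiset_eqI) (use io_N io_M disjoint_places in \<open>auto simp: count_outp count_io algebra_simps\<close>)
  then have JJ: "J' + k' \<le> J"
    using sub_sound_no_overproduction[OF pw_M sound_M marking_inner] run_M by metis
  have "projected_N (m' + repeat_mset k' (mset_set (outp N'))) (J - J')
      = (projected_N m' (J - (J' + k'))) + repeat_mset k' (mset_set (outp N))"
    by (rule multiset_eqI) (use io_N io_M disjoint_places p_out JJ p_inner in
        \<open>auto simp: count_outp count_io\<close>)
  then have "reach N (projected_N m' (J - (J' + k'))) (repeat_mset (k - k') (mset_set (outp N)))"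
    using sound_N kk marking_outer[OF mk] run_N unfolding sub_sound_p_def by metis
  moreover have "reach M (inner m') (repeat_mset (J - (J' + k')) (mset_set (outp M)))"
    using sound_M JJ marking_inner run_M unfolding inner_m sub_sound_p_def by metis
  moreover have "expand (repeat_mset (k - k') (mset_set (outp N))) = repeat_mset (k - k') (mset_set (outp N'))"
    by (rule multiset_eqI) (use p_out p_inner in \<open>auto simp: expand_def count_io count_outp\<close>)
  ultimately show ?thesis using combine_runs[OF mk] by metis
qed

theorem sub_sound: "sub_sound_p N'"
  unfolding sub_sound_p_def
proof (intro allI impI)
  fix k k' m'
  assume kk: "k' \<le> k" and mk: "marking N' m'"
    and r: "reach N' (repeat_mset k (mset_set (inp N'))) (m' + repeat_mset k' (mset_set (outp N')))"
  obtain J J' where "J' \<le> J"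
    "reach N (repeat_mset k (mset_set (inp N)))
      (projected_N (m' + repeat_mset k' (mset_set (outp N'))) (J - J'))"
    "reach M (repeat_mset J (mset_set (inp M)))
      (projected_M (m' + repeat_mset k' (mset_set (outp N'))) J')"
    using projects_reach[OF r] unfolding projects_def by blast
  then show "reach N' m' (repeat_mset (k - k') (mset_set (outp N')))"
    using finish_p_not_output finish_p_output kk mk by (cases "p \<in> outp N") blast+
qed

end

text \<open>Sub-soundness
  of \<open>M\<close> means sub-soundness of its completion \<open>pc M\<close>, whose start place \<open>Inr False\<close>
  stands for an occurrence of \<open>t\<close> that has begun and whose final place \<open>Inr True\<close> for one
  that has ended.\<close>

lemma count_image_Inl [simp]:
  "count (image_mset Inl A) (Inl q) = count A q" "count (image_mset Inl A) (Inr b) = 0"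
  by (induction A) auto

lemma count_projl_isl [simp]: "count (image_mset projl (filter_mset isl z)) q = count z (Inl q)"
  by (induction z) (auto simp: isl_def split: sum.splits)

locale trans_subst =
  fixes N M :: "'n net" and t :: 'n
  assumes pw_N: "pWF N" and tw_M: "tWF M" and disj: "nodes N \<inter> nodes M = {}"
    and t: "t \<in> trans N" and sound_N: "sub_sound_p N" and sound_M: "sub_sound_p (pc M)"
begin

abbreviation "N' \<equiv> subst_trans N t M"

lemma pn_N: "petri_net N" using pw_N by (rule pWF_petri_net)
lemma pn_M: "petri_net M" using tw_M by (rule tWF_petri_net)
lemma pw_pc: "pWF (pc M)" using pc_pWF[OF tw_M] .

lemma io_M: "inp M \<subseteq> trans M" "outp M \<subseteq> trans M" using tw_M unfolding tWF_def by auto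
lemma io_N: "inp N \<subseteq> places N" "outp N \<subseteq> places N" using pw_N unfolding pWF_def by auto

lemma in_nodes: "x \<in> places N \<Longrightarrow> x \<in> nodes N" "x \<in> trans N \<Longrightarrow> x \<in> nodes N"
  "x \<in> places M \<Longrightarrow> x \<in> nodes M" "x \<in> trans M \<Longrightarrow> x \<in> nodes M"
  unfolding nodes_def by auto

lemma disjoint_nodes: "x \<in> nodes N \<Longrightarrow> x \<notin> nodes M" using disj by auto

lemma inner_not_outer: "q \<in> places M \<Longrightarrow> q \<notin> places N" "q \<in> trans M \<Longrightarrow> q \<notin> trans N"
  using in_nodes disjoint_nodes by blast+

lemma subst_simps:
  "places N' = places N \<union> places M" "trans N' = (trans N - {t}) \<union> trans M"
  "flow N' = {e \<in> flow N. fst e \<noteq> t \<and> snd e \<noteq> t} \<union> flow M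
            \<union> {(q, t') | q t'. q \<in> preset N t \<and> t' \<in> inp M}
            \<union> {(t', q) | t' q. t' \<in> outp M \<and> q \<in> postset N t}"
  "inp N' = inp N" "outp N' = outp N"
  using t io_N pn_N unfolding subst_trans_def petri_net_def by auto

lemma pre_post_t: "preset N t \<subseteq> places N" "postset N t \<subseteq> places N"
  using preset_trans_places[OF pn_N t] postset_trans_places[OF pn_N t] .

lemma finite_pre_post:
  "finite (preset N u)" "finite (postset N u)" "finite (preset M u)" "finite (postset M u)"
  by (simp_all add: petri_net_finite_preset[OF pn_N] petri_net_finite_postset[OF pn_N]
      petri_net_finite_preset[OF pn_M] petri_net_finite_postset[OF pn_M])

lemma count_io:
  "count (mset_set (inp N)) q = (if q \<in> inp N then 1 else 0)"
  "count (mset_set (outp N)) q = (if q \<in> outp N then 1 else 0)"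
  "count (mset_set (preset N t)) q = (if q \<in> preset N t then 1 else 0)"
  "count (mset_set (postset N t)) q = (if q \<in> postset N t then 1 else 0)"
  using pWF_finite_inp[OF pw_N] pWF_finite_outp[OF pw_N] finite_pre_post by simp_all

lemma pre_postset_outer:
  assumes u: "u \<in> trans N" "u \<noteq> t"
  shows "preset N' u = preset N u" "postset N' u = postset N u"
proof -
  have uN: "u \<in> nodes N" using in_nodes u by auto
  have "u \<notin> places N" using u pn_N unfolding petri_net_def by auto
  then have "u \<notin> preset N t" "u \<notin> postset N t" using pre_post_t by auto
  then show "preset N' u = preset N u" "postset N' u = postset N u"
    using uN u disjoint_nodes io_M flow_in_nodes[OF pn_M] in_nodes
    unfolding preset_def postset_def subst_simps by (auto, blast+)
qed

lemma pre_postset_inner: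
  assumes u: "u \<in> trans M"
  shows "preset N' u = preset M u \<union> (if u \<in> inp M then preset N t else {})"
    "postset N' u = postset M u \<union> (if u \<in> outp M then postset N t else {})"
proof -
  have uM: "u \<in> nodes M" using in_nodes u by auto
  then have "u \<noteq> t" "u \<notin> preset N t" "u \<notin> postset N t"
    using t pre_post_t in_nodes disjoint_nodes by blast+
  then show "preset N' u = preset M u \<union> (if u \<in> inp M then preset N t else {})"
    "postset N' u = postset M u \<union> (if u \<in> outp M then postset N t else {})"
    using uM disjoint_nodes flow_in_nodes[OF pn_N] unfolding preset_def postset_def subst_simps by auto
qed

lemma count_preset_inner: "u \<in> trans M \<Longrightarrow> count (mset_set (preset N' u)) q =
    (if q \<in> preset M u then 1 else 0) + (if u \<in> inp M \<and> q \<in> preset N t then 1 else 0)"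
proof -
  assume u: "u \<in> trans M"
  have "preset M u \<inter> preset N t = {}"
    using preset_trans_places[OF pn_M u] pre_post_t inner_not_outer by blast
  then show ?thesis unfolding pre_postset_inner[OF u] using finite_pre_post(1,3) by auto
qed

lemma count_postset_inner: "u \<in> trans M \<Longrightarrow> count (mset_set (postset N' u)) q =
    (if q \<in> postset M u then 1 else 0) + (if u \<in> outp M \<and> q \<in> postset N t then 1 else 0)"
proof -
  assume u: "u \<in> trans M"
  have "postset M u \<inter> postset N t = {}"
    using postset_trans_places[OF pn_M u] pre_post_t inner_not_outer by blast
  then show ?thesis unfolding pre_postset_inner[OF u] using finite_pre_post(2,4) by auto
qed

lemma count_preset_pc: "u \<in> trans M \<Longrightarrow> count (mset_set (preset (pc M) (Inl u))) x =
    (case x of Inl q \<Rightarrow> (if q \<in> preset M u then 1 else 0) | Inr b \<Rightarrow> (if \<not> b \<and> u \<in> inp M then 1 else 0))"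
  using finite_pre_post(3)[of u] by (auto simp: pc_preset_Inl count_mset_set_if split: sum.splits)

lemma count_postset_pc: "u \<in> trans M \<Longrightarrow> count (mset_set (postset (pc M) (Inl u))) x =
    (case x of Inl q \<Rightarrow> (if q \<in> postset M u then 1 else 0) | Inr b \<Rightarrow> (if b \<and> u \<in> outp M then 1 else 0))"
  using finite_pre_post(4)[of u] by (auto simp: pc_postset_Inl count_mset_set_if split: sum.splits)

text \<open>Runs of \<open>pc M\<close> are runs of \<open>N'\<close> once the start place is replaced by the input places
  of \<open>t\<close> and the final place by the output places of \<open>t\<close>.\<close>

definition collapse :: "('n + bool) multiset \<Rightarrow> 'n multiset" where
  "collapse z = image_mset projl (filter_mset isl z)
     + repeat_mset (count z (Inr False)) (mset_set (preset N t))
     + repeat_mset (count z (Inr True)) (mset_set (postset N t))"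

lemma count_collapse: "count (collapse z) q = count z (Inl q)
    + count z (Inr False) * (if q \<in> preset N t then 1 else 0)
    + count z (Inr True) * (if q \<in> postset N t then 1 else 0)"
  unfolding collapse_def by (simp add: count_io)

lemma collapse_fire:
  assumes f: "fire (pc M) z z2" shows "fire N' (collapse z) (collapse z2)"
proof -
  obtain v where v: "v \<in> trans (pc M)" "mset_set (preset (pc M) v) \<subseteq># z"
    "z2 + mset_set (preset (pc M) v) = z + mset_set (postset (pc M) v)" using f by (auto elim: fire_elim)
  obtain u where u: "v = Inl u" "u \<in> trans M" using v(1) by auto
  have balance: "count z2 x + count (mset_set (preset (pc M) (Inl u))) x
      = count z x + count (mset_set (postset (pc M) (Inl u))) x" for x
    using arg_cong[OF v(3), of "\<lambda>m. count m x"] u by simp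
  have enabled: "count (mset_set (preset (pc M) (Inl u))) x \<le> count z x" for x
    using v(2) u unfolding subseteq_mset_def by blast
  have uN': "u \<in> trans N'" using u by (simp add: subst_simps)
  have apart: "q \<in> preset M u \<or> q \<in> postset M u \<Longrightarrow> q \<notin> preset N t \<and> q \<notin> postset N t" for q
    using preset_trans_places[OF pn_M u(2)] postset_trans_places[OF pn_M u(2)] pre_post_t inner_not_outer
    by blast
  show ?thesis
  proof (rule fire_intro[OF uN'])
    show "mset_set (preset N' u) \<subseteq># collapse z"
    proof (rule mset_subset_eqI)
      fix q
      show "count (mset_set (preset N' u)) q \<le> count (collapse z) q"
        using enabled[of "Inl q"] enabled[of "Inr False"] apart[of q]
        unfolding count_preset_inner[OF u(2)] count_collapse count_preset_pc[OF u(2)]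
        by (auto split: if_splits simp: in_count_le_add simp del: count_greater_zero_iff)
    qed
    show "collapse z2 + mset_set (preset N' u) = collapse z + mset_set (postset N' u)"
    proof (rule multiset_eqI)
      fix q
      show "count (collapse z2 + mset_set (preset N' u)) q = count (collapse z + mset_set (postset N' u)) q"
        using balance[of "Inl q"] balance[of "Inr False"] balance[of "Inr True"] apart[of q]
        unfolding count_union count_preset_inner[OF u(2)] count_postset_inner[OF u(2)] count_collapse
          count_preset_pc[OF u(2)] count_postset_pc[OF u(2)]
        by (auto split: if_splits simp: algebra_simps)
    qed
  qed
qed

lemma collapse_reach: "reach (pc M) z z2 \<Longrightarrow> reach N' (collapse z) (collapse z2)"
  using reach_simulation[of "fire (pc M)" z z2 N' collapse] collapse_fire fire_reach
  unfolding reach_def[of "pc M"] by blast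

lemma collapse_Inl: "collapse (image_mset Inl a) = a"
  by (rule multiset_eqI) (simp add: count_collapse)

lemma collapse_final: "collapse (repeat_mset c {#Inr True#}) = repeat_mset c (mset_set (postset N t))"
  by (rule multiset_eqI) (simp add: count_collapse count_io)

lemma reach_t: "reach N' (mset_set (preset N t)) (mset_set (postset N t))"
proof -
  have "reach (pc M) {#Inr False#} (repeat_mset 1 {#Inr True#})"
    using sub_sound_single_run[OF pw_pc sound_M] by simp
  from collapse_reach[OF this] have "reach N' (collapse {#Inr False#}) (mset_set (postset N t))"
    unfolding collapse_final by simp
  moreover have "collapse {#Inr False#} = mset_set (preset N t)"
    by (rule multiset_eqI) (simp add: count_collapse count_io)
  ultimately show ?thesis by simp
qed

lemma fire_outer: "fire N y z \<Longrightarrow> reach N' y z"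
proof (erule fire_elim)
  fix u assume u: "u \<in> trans N" "mset_set (preset N u) \<subseteq># y"
    "z + mset_set (preset N u) = y + mset_set (postset N u)"
  have z: "z = y - mset_set (preset N u) + mset_set (postset N u)"
    using u(2,3) by (metis add_diff_cancel_right' subset_mset.add_diff_assoc2)
  show "reach N' y z"
  proof (cases "u = t")
    case True
    have "y = mset_set (preset N t) + (y - mset_set (preset N t))"
      using u(2) True by (simp add: subset_mset.add_diff_inverse)
    then show ?thesis using reach_mono[OF reach_t, of "y - mset_set (preset N t)"] z True
      by (simp add: add_ac)
  next
    case False
    have "fire N' y z"
      by (rule fire_intro[of u]) (use u False pre_postset_outer[OF u(1) False] in \<open>auto simp: subst_simps\<close>)
    then show ?thesis by (rule fire_reach)
  qed
qed

lemma reach_outer: "reach N y z \<Longrightarrow> reach N' y z"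
  using reach_simulation[of "fire N" y z N' "\<lambda>m. m"] fire_outer unfolding reach_def[of N] by blast

definition outer :: "'n multiset \<Rightarrow> 'n multiset" where
  "outer m = filter_mset (\<lambda>q. q \<notin> places M) m"

definition inner :: "'n multiset \<Rightarrow> 'n multiset" where
  "inner m = filter_mset (\<lambda>q. q \<in> places M) m"

lemma count_outer [simp]: "count (outer m) q = (if q \<in> places M then 0 else count m q)"
  unfolding outer_def by simp

lemma count_inner [simp]: "count (inner m) q = (if q \<in> places M then count m q else 0)"
  unfolding inner_def by simp

text \<open>The projection onto \<open>N\<close> of a marking \<open>m\<close> of \<open>N'\<close> when \<open>c\<close> occurrences of \<open>t\<close> are
  under way inside \<open>M\<close>: these are taken to have completed already.\<close>

abbreviation projected_N :: "'n multiset \<Rightarrow> nat \<Rightarrow> 'n multiset" where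
  "projected_N m c \<equiv> outer m + repeat_mset c (mset_set (postset N t))"

abbreviation projected_M :: "'n multiset \<Rightarrow> nat \<Rightarrow> ('n + bool) multiset" where
  "projected_M m c \<equiv> image_mset Inl (inner m) + repeat_mset c {#Inr True#}"

text \<open>The projection invariant of a run of \<open>N'\<close>: \<open>t\<close> has begun \<open>J\<close> and ended \<open>J'\<close> times in
  a run of \<open>pc M\<close>, and the projection onto \<open>N\<close> is reachable in \<open>N\<close>.\<close>

definition projects :: "nat \<Rightarrow> 'n multiset \<Rightarrow> bool" where
  "projects k m \<longleftrightarrow> (\<exists>J J'. J' \<le> J
     \<and> reach N (repeat_mset k (mset_set (inp N))) (projected_N m (J - J'))
     \<and> reach (pc M) (repeat_mset J {#Inr False#}) (projected_M m J'))"

lemma projects_start: "projects k (repeat_mset k (mset_set (inp N)))"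
proof -
  have "outer (repeat_mset k (mset_set (inp N))) = repeat_mset k (mset_set (inp N))"
    by (rule multiset_eqI) (use io_N inner_not_outer in \<open>auto simp: count_io\<close>)
  moreover have "inner (repeat_mset k (mset_set (inp N))) = {#}"
    by (rule multiset_eqI) (use io_N inner_not_outer in \<open>auto simp: count_io\<close>)
  ultimately show ?thesis unfolding projects_def
    by (metis add.right_neutral diff_self_eq_0 image_mset_empty le_refl repeat_mset_cancel1
        reach_def rtranclp.rtrancl_refl repeat_mset_empty)
qed

lemma projects_outer_fire:
  assumes proj: "projects k m" and u: "u \<in> trans N" "u \<noteq> t"
    and pre_u: "mset_set (preset N' u) \<subseteq># m"
    and step: "m2 + mset_set (preset N' u) = m + mset_set (postset N' u)"
  shows "projects k m2"
proof -
  obtain J J' where IH: "J' \<le> J"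
    "reach N (repeat_mset k (mset_set (inp N))) (projected_N m (J - J'))"
    "reach (pc M) (repeat_mset J {#Inr False#}) (projected_M m J')"
    using proj unfolding projects_def by blast
  have pp: "preset N' u = preset N u" "postset N' u = postset N u" using pre_postset_outer[OF u] by auto
  have pl: "preset N u \<subseteq> places N" "postset N u \<subseteq> places N"
    using preset_trans_places[OF pn_N u(1)] postset_trans_places[OF pn_N u(1)] by auto
  have balance: "count m2 q + count (mset_set (preset N u)) q = count m q + count (mset_set (postset N u)) q" for q
    using arg_cong[OF step, of "\<lambda>m. count m q"] unfolding pp by simp
  have enabled: "count (mset_set (preset N u)) q \<le> count m q" for q
    using pre_u unfolding pp subseteq_mset_def by blast
  have "inner m2 = inner m"
  proof (rule multiset_eqI)
    fix q show "count (inner m2) q = count (inner m) q"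
      using balance[of q] pl inner_not_outer[of q]
      unfolding count_mset_set_if[OF finite_pre_post(1)] count_mset_set_if[OF finite_pre_post(2)]
      by (auto split: if_splits)
  qed
  moreover have "fire N (projected_N m (J - J')) (projected_N m2 (J - J'))"
  proof (rule fire_intro[OF u(1)])
    show "mset_set (preset N u) \<subseteq># projected_N m (J - J')"
    proof (rule mset_subset_eqI)
      fix q show "count (mset_set (preset N u)) q \<le> count (projected_N m (J - J')) q"
        using enabled[of q] pl inner_not_outer[of q] unfolding count_mset_set_if[OF finite_pre_post(1)]
        by (auto simp: in_count_le_add split: if_splits)
    qed
    show "projected_N m2 (J - J') + mset_set (preset N u) =
          projected_N m (J - J') + mset_set (postset N u)"
    proof (rule multiset_eqI)
      fix q show "count (projected_N m2 (J - J') + mset_set (preset N u)) q =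
          count (projected_N m (J - J') + mset_set (postset N u)) q"
        using balance[of q] pl inner_not_outer[of q] unfolding count_union
          count_mset_set_if[OF finite_pre_post(1)] count_mset_set_if[OF finite_pre_post(2)]
        by (auto split: if_splits)
    qed
  qed
  ultimately show ?thesis using IH unfolding projects_def by (metis reach_fire_trans)
qed

lemma inner_fire_pc:
  assumes u: "u \<in> trans M" and pre_u: "mset_set (preset N' u) \<subseteq># m"
    and step: "m2 + mset_set (preset N' u) = m + mset_set (postset N' u)"
  shows "fire (pc M)
    (projected_M m J' + repeat_mset (if u \<in> inp M then 1 else 0) {#Inr False#})
    (projected_M m2 (J' + (if u \<in> outp M then 1 else 0)))"
proof (rule fire_intro[of "Inl u"])
  have balance: "count m2 q + count (mset_set (preset N' u)) q = count m q + count (mset_set (postset N' u)) q" for q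
    using arg_cong[OF step, of "\<lambda>m. count m q"] by simp
  have enabled: "count (mset_set (preset N' u)) q \<le> count m q" for q
    using pre_u unfolding subseteq_mset_def by blast
  have pl: "preset M u \<subseteq> places M" "postset M u \<subseteq> places M"
    using preset_trans_places[OF pn_M u] postset_trans_places[OF pn_M u] by auto
  show "Inl u \<in> trans (pc M)" using u by simp
  show "mset_set (preset (pc M) (Inl u)) \<subseteq># projected_M m J'
      + repeat_mset (if u \<in> inp M then 1 else 0) {#Inr False#}"
  proof (rule mset_subset_eqI)
    fix x
    show "count (mset_set (preset (pc M) (Inl u))) x
        \<le> count (projected_M m J' + repeat_mset (if u \<in> inp M then 1 else 0) {#Inr False#}) x"
    proof (cases x)
      case (Inl q)
      show ?thesis
      proof (cases "q \<in> preset M u")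
        case True
        then have "q \<in># m" using enabled[of q] unfolding count_preset_inner[OF u] by (auto intro: count_ge_Suc_in)
        then show ?thesis using True Inl pl unfolding count_preset_pc[OF u] by auto
      qed (use Inl in \<open>simp add: count_preset_pc[OF u]\<close>)
    qed (simp add: count_preset_pc[OF u])
  qed
  show "projected_M m2 (J' + (if u \<in> outp M then 1 else 0))
      + mset_set (preset (pc M) (Inl u))
    = projected_M m J' + repeat_mset (if u \<in> inp M then 1 else 0) {#Inr False#}
      + mset_set (postset (pc M) (Inl u))"
  proof (rule multiset_eqI)
    fix x
    show "count (projected_M m2 (J' + (if u \<in> outp M then 1 else 0))
        + mset_set (preset (pc M) (Inl u))) x
      = count (projected_M m J' + repeat_mset (if u \<in> inp M then 1 else 0) {#Inr False#}
        + mset_set (postset (pc M) (Inl u))) x"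
    proof (cases x)
      case (Inl q)
      show ?thesis
      proof (cases "q \<in> places M")
        case True
        then have "q \<notin> preset N t" "q \<notin> postset N t" using pre_post_t inner_not_outer by auto
        then show ?thesis using balance[of q] Inl True unfolding count_union count_preset_inner[OF u]
          count_postset_inner[OF u] count_preset_pc[OF u] count_postset_pc[OF u] by simp
      qed (use Inl pl in \<open>auto simp: count_preset_pc[OF u] count_postset_pc[OF u]\<close>)
    qed (auto simp: count_preset_pc[OF u] count_postset_pc[OF u])
  qed
qed

text \<open>In the projection onto \<open>N\<close>, an input transition of \<open>M\<close> starts an occurrence of \<open>t\<close>,
  which is fired at once; other transitions of \<open>M\<close> leave the projection unchanged.\<close>

lemma inner_input_fires_t:
  assumes u: "u \<in> trans M" "u \<in> inp M" and pre_u: "mset_set (preset N' u) \<subseteq># m"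
    and step: "m2 + mset_set (preset N' u) = m + mset_set (postset N' u)"
    and JJ: "J' \<le> J" and ended: "J' + (if u \<in> outp M then 1 else 0) \<le> Suc J"
  shows "fire N (projected_N m (J - J')) (projected_N m2 (Suc J - (J' + (if u \<in> outp M then 1 else 0))))"
proof (rule fire_intro[OF t])
  have balance: "count m2 q + count (mset_set (preset N' u)) q = count m q + count (mset_set (postset N' u)) q" for q
    using arg_cong[OF step, of "\<lambda>m. count m q"] by simp
  have enabled: "count (mset_set (preset N' u)) q \<le> count m q" for q
    using pre_u unfolding subseteq_mset_def by blast
  have pl: "preset M u \<subseteq> places M" "postset M u \<subseteq> places M"
    using preset_trans_places[OF pn_M u(1)] postset_trans_places[OF pn_M u(1)] by auto
  show "mset_set (preset N t) \<subseteq># projected_N m (J - J')"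
  proof (rule mset_subset_eqI)
    fix q show "count (mset_set (preset N t)) q \<le> count (projected_N m (J - J')) q"
      using enabled[of q] u(2) pre_post_t inner_not_outer[of q] unfolding count_preset_inner[OF u(1)]
      by (auto simp: count_io split: if_splits intro: count_ge_Suc_in)
  qed
  show "projected_N m2 (Suc J - (J' + (if u \<in> outp M then 1 else 0))) + mset_set (preset N t)
    = projected_N m (J - J') + mset_set (postset N t)"
  proof (rule multiset_eqI)
    fix q show "count (projected_N m2 (Suc J - (J' + (if u \<in> outp M then 1 else 0))) + mset_set (preset N t)) q
      = count (projected_N m (J - J') + mset_set (postset N t)) q"
      using balance[of q] u(2) ended JJ pl pre_post_t inner_not_outer[of q]
      unfolding count_union count_preset_inner[OF u(1)] count_postset_inner[OF u(1)]
      by (auto simp: count_io algebra_simps split: if_splits)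
  qed
qed

lemma inner_fire_outer:
  assumes u: "u \<in> trans M" and pre_u: "mset_set (preset N' u) \<subseteq># m"
    and step: "m2 + mset_set (preset N' u) = m + mset_set (postset N' u)"
    and JJ: "J' \<le> J"
    and ended: "J' + (if u \<in> outp M then 1 else 0) \<le> J + (if u \<in> inp M then 1 else 0)"
  shows "reach N (projected_N m (J - J'))
    (projected_N m2 (J + (if u \<in> inp M then 1 else 0) - (J' + (if u \<in> outp M then 1 else 0))))"
proof (cases "u \<in> inp M")
  case True
  then show ?thesis using inner_input_fires_t[OF u True pre_u step JJ] ended by (simp add: fire_reach)
next
  case False
  have balance: "count m2 q + count (mset_set (preset N' u)) q = count m q + count (mset_set (postset N' u)) q" for q
    using arg_cong[OF step, of "\<lambda>m. count m q"] by simp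
  have pl: "preset M u \<subseteq> places M" "postset M u \<subseteq> places M"
    using preset_trans_places[OF pn_M u] postset_trans_places[OF pn_M u] by auto
  have "projected_N m2 (J + (if u \<in> inp M then 1 else 0) - (J' + (if u \<in> outp M then 1 else 0)))
      = projected_N m (J - J')"
  proof (rule multiset_eqI)
    fix q show "count (projected_N m2 (J + (if u \<in> inp M then 1 else 0) - (J' + (if u \<in> outp M then 1 else 0)))) q
        = count (projected_N m (J - J')) q"
      using balance[of q] False ended JJ pl pre_post_t inner_not_outer[of q]
      unfolding count_union count_preset_inner[OF u] count_postset_inner[OF u]
      by (auto simp: count_io split: if_splits)
  qed
  then show ?thesis by (simp add: reach_def)
qed

lemma projects_inner_fire:
  assumes proj: "projects k m" and u: "u \<in> trans M"
    and pre_u: "mset_set (preset N' u) \<subseteq># m"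
    and step: "m2 + mset_set (preset N' u) = m + mset_set (postset N' u)"
  shows "projects k m2"
proof -
  obtain J J' where IH: "J' \<le> J"
    "reach N (repeat_mset k (mset_set (inp N))) (projected_N m (J - J'))"
    "reach (pc M) (repeat_mset J {#Inr False#}) (projected_M m J')"
    using proj unfolding projects_def by blast
  define i :: nat where "i = (if u \<in> inp M then 1 else 0)"
  define o' :: nat where "o' = (if u \<in> outp M then 1 else 0)"
  have run_pc: "reach (pc M) (repeat_mset (J + i) {#Inr False#}) (projected_M m2 (J' + o'))"
  proof -
    have "reach (pc M) (repeat_mset J {#Inr False#} + repeat_mset i {#Inr False#})
        (projected_M m J' + repeat_mset i {#Inr False#})"
      by (rule reach_mono[OF IH(3)])
    from reach_fire_trans[OF this inner_fire_pc[OF u pre_u step, of J', folded i_def o'_def]]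
    show ?thesis unfolding repeat_mset_distrib .
  qed
  have ended: "J' + o' \<le> J + i"
  proof (rule sub_sound_no_overproduction[OF pw_pc sound_M])
    show "marking (pc M) (image_mset Inl (inner m2))" unfolding marking_def inner_def by auto
  qed (use run_pc in simp)
  have "reach N (repeat_mset k (mset_set (inp N))) (projected_N m2 (J + i - (J' + o')))"
    using IH(2) inner_fire_outer[OF u pre_u step IH(1) ended[unfolded i_def o'_def]]
    unfolding i_def o'_def by (rule reach_trans)
  then show ?thesis using ended run_pc unfolding projects_def by blast
qed

lemma projects_reach:
  assumes "reach N' (repeat_mset k (mset_set (inp N))) m" shows "projects k m"
  using assms unfolding reach_def
proof (induction rule: rtranclp_induct)
  case base then show ?case by (rule projects_start)
next
  case (step m m2)
  then obtain u where u: "u \<in> trans N'" "mset_set (preset N' u) \<subseteq># m"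
    "m2 + mset_set (preset N' u) = m + mset_set (postset N' u)" by (auto elim: fire_elim)
  show ?case
  proof (cases "u \<in> trans M")
    case True then show ?thesis using projects_inner_fire step.IH u(2,3) by blast
  next
    case False
    then have "u \<in> trans N" "u \<noteq> t" using u(1) by (auto simp: subst_simps)
    then show ?thesis using projects_outer_fire step.IH u(2,3) by blast
  qed
qed

theorem sub_sound: "sub_sound_p N'"
  unfolding sub_sound_p_def
proof (intro allI impI)
  fix k k' m'
  assume kk: "k' \<le> k" and mk: "marking N' m'"
    and r: "reach N' (repeat_mset k (mset_set (inp N'))) (m' + repeat_mset k' (mset_set (outp N')))"
  let ?m = "m' + repeat_mset k' (mset_set (outp N))"
  obtain J J' where JJ: "J' \<le> J"
    and run_N: "reach N (repeat_mset k (mset_set (inp N))) (projected_N ?m (J - J'))"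
    and run_pc: "reach (pc M) (repeat_mset J {#Inr False#}) (projected_M ?m J')"
    using projects_reach[OF r[unfolded subst_simps]] unfolding projects_def by blast
  have "projected_N ?m (J - J')
      = projected_N m' (J - J') + repeat_mset k' (mset_set (outp N))"
    by (rule multiset_eqI) (use io_N inner_not_outer in \<open>auto simp: count_io\<close>)
  moreover have "marking N (projected_N m' (J - J'))"
    using mk pre_post_t finite_pre_post(2)[of t] unfolding marking_def outer_def subst_simps by auto
  ultimately have finish_N: "reach N (projected_N m' (J - J'))
      (repeat_mset (k - k') (mset_set (outp N)))"
    using sound_N kk run_N unfolding sub_sound_p_def by metis
  have "inner ?m = inner m'"
    by (rule multiset_eqI) (use io_N inner_not_outer in \<open>auto simp: count_io\<close>)
  moreover have "marking (pc M) (image_mset Inl (inner m'))" unfolding marking_def inner_def by auto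
  moreover have "reach (pc M) (repeat_mset J (mset_set (inp (pc M))))
      (image_mset Inl (inner ?m) + repeat_mset J' (mset_set (outp (pc M))))"
    using run_pc by simp
  ultimately have "reach (pc M) (image_mset Inl (inner m')) (repeat_mset (J - J') (mset_set (outp (pc M))))"
    using sound_M JJ unfolding sub_sound_p_def by metis
  then have "reach N' (inner m') (repeat_mset (J - J') (mset_set (postset N t)))"
    using collapse_reach collapse_Inl collapse_final by fastforce
  from reach_mono[OF this, of "outer m'"]
  have "reach N' m' (projected_N m' (J - J'))"
    using multiset_eqI[of m' "inner m' + outer m'"] by (simp add: add_ac)
  then show "reach N' m' (repeat_mset (k - k') (mset_set (outp N')))"
    using reach_outer[OF finish_N] unfolding subst_simps by (meson reach_trans)
qed
end

text \<open>Both substitutions replace a node \<open>x\<close> of the flow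
  relation \<open>R\<close> by a flow relation \<open>S\<close> with entry nodes \<open>Ent\<close> and exit nodes \<open>Ext\<close>; the following
  graph-theoretic lemmas show that connectivity is preserved.\<close>

definition node_subst_flow :: "('a \<times> 'a) set \<Rightarrow> 'a \<Rightarrow> ('a \<times> 'a) set \<Rightarrow> 'a set \<Rightarrow> 'a set \<Rightarrow> ('a \<times> 'a) set" where
  "node_subst_flow R x S Ent Ext = {e \<in> R. fst e \<noteq> x \<and> snd e \<noteq> x} \<union> S
     \<union> {(a, b) | a b. (a, x) \<in> R \<and> b \<in> Ent} \<union> {(b, a) | b a. b \<in> Ext \<and> (x, a) \<in> R}"

lemma node_subst_flow_converse:
  "(node_subst_flow R x S Ent Ext)\<inverse> = node_subst_flow (R\<inverse>) x (S\<inverse>) Ext Ent"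
  unfolding node_subst_flow_def by auto

text \<open>A path of \<open>R\<close> survives the substitution: the node \<open>x\<close> at either end is replaced by
  the exit resp. entry nodes, and an inner visit of \<open>x\<close> by a path through \<open>S\<close>.\<close>

lemma node_subst_path:
  fixes R S :: "('a \<times> 'a) set" and x :: 'a and Ent Ext :: "'a set"
  defines "F \<equiv> node_subst_flow R x S Ent Ext"
  assumes irrefl: "(x, x) \<notin> R" and Ent_ne: "Ent \<noteq> {}"
    and through: "\<And>b. b \<in> Ent \<Longrightarrow> \<exists>c \<in> Ext. (b, c) \<in> S\<^sup>*"
    and path: "(y, z) \<in> R\<^sup>*"
  shows "y = z \<or> (\<forall>a \<in> (if y = x then Ext else {y}). \<forall>b \<in> (if z = x then Ent else {z}). (a, b) \<in> F\<^sup>*)"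
  using path
proof (induction rule: rtrancl_induct)
  case (step z w)
  have SF: "S\<^sup>* \<subseteq> F\<^sup>*" unfolding F_def node_subst_flow_def by (rule rtrancl_mono) blast
  have edge: "\<forall>a \<in> (if z = x then Ext else {z}). \<forall>b \<in> (if w = x then Ent else {w}). (a, b) \<in> F"
    using step(2) irrefl unfolding F_def node_subst_flow_def by auto
  show ?case
  proof (cases "y = z")
    case True
    then show ?thesis using edge by (metis r_into_rtrancl)
  next
    case False
    with step(3) have IH: "\<forall>a \<in> (if y = x then Ext else {y}). \<forall>b \<in> (if z = x then Ent else {z}). (a, b) \<in> F\<^sup>*"
      by blast
    have "(a, b) \<in> F\<^sup>*" if a: "a \<in> (if y = x then Ext else {y})" and b: "b \<in> (if w = x then Ent else {w})" for a b
    proof (cases "z = x")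
      case True
      obtain c where c: "c \<in> Ent" using Ent_ne by blast
      obtain d where d: "d \<in> Ext" "(c, d) \<in> S\<^sup>*" using through[OF c] by blast
      have "(a, c) \<in> F\<^sup>*" using IH a c True by auto
      moreover have "(d, b) \<in> F" using edge d True b by auto
      ultimately show ?thesis using SF d(2) by (meson rtrancl_trans r_into_rtrancl subsetD)
    next
      case False
      have "(a, z) \<in> F\<^sup>*" using IH a False by auto
      moreover have "(z, b) \<in> F" using edge b False by auto
      ultimately show ?thesis by (meson rtrancl.rtrancl_into_rtrancl)
    qed
    then show ?thesis by blast
  qed
qed simp

lemma node_subst_reachable:
  fixes R S :: "('a \<times> 'a) set" and x :: 'a and Ent Ext :: "'a set"
  defines "F \<equiv> node_subst_flow R x S Ent Ext"
  assumes irrefl: "(x, x) \<notin> R" and Ent_ne: "Ent \<noteq> {}" and x: "x \<in> VN"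
    and through: "\<And>b. b \<in> Ent \<Longrightarrow> \<exists>c \<in> Ext. (b, c) \<in> S\<^sup>*"
    and reach_R: "\<And>y. y \<in> VN \<Longrightarrow> \<exists>i \<in> IN. (i, y) \<in> R\<^sup>*"
    and reach_S: "\<And>y. y \<in> VM \<Longrightarrow> \<exists>i \<in> Ent. (i, y) \<in> S\<^sup>*"
    and y: "y \<in> (VN - {x}) \<union> VM"
  shows "\<exists>i \<in> (if x \<in> IN then (IN - {x}) \<union> Ent else IN). (i, y) \<in> F\<^sup>*"
proof -
  let ?IN' = "if x \<in> IN then (IN - {x}) \<union> Ent else IN"
  have SF: "S\<^sup>* \<subseteq> F\<^sup>*" unfolding F_def node_subst_flow_def by (rule rtrancl_mono) blast
  have path: "y0 = z0 \<or> (\<forall>a \<in> (if y0 = x then Ext else {y0}). \<forall>b \<in> (if z0 = x then Ent else {z0}). (a, b) \<in> F\<^sup>*)"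
    if "(y0, z0) \<in> R\<^sup>*" for y0 z0
    unfolding F_def by (rule node_subst_path[OF irrefl Ent_ne _ that]) (rule through)
  have from_I: "\<exists>i \<in> ?IN'. (i, c) \<in> F\<^sup>*" if c: "c \<in> Ent" for c
  proof (cases "x \<in> IN")
    case False
    obtain i0 where i0: "i0 \<in> IN" "(i0, x) \<in> R\<^sup>*" using reach_R[OF x] by blast
    have "i0 \<noteq> x" using i0 False by auto
    then have "(i0, c) \<in> F\<^sup>*" using path[OF i0(2)] c by auto
    then show ?thesis using False i0 by auto
  qed (use c in auto)
  show ?thesis
  proof (cases "y \<in> VM")
    case True
    obtain c where c: "c \<in> Ent" "(c, y) \<in> S\<^sup>*" using reach_S[OF True] by blast
    then show ?thesis using from_I[OF c(1)] SF by (meson rtrancl_trans subsetD)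
  next
    case False
    then have yN: "y \<in> VN" "y \<noteq> x" using y by auto
    obtain i0 where i0: "i0 \<in> IN" "(i0, y) \<in> R\<^sup>*" using reach_R[OF yN(1)] by blast
    show ?thesis
    proof (cases "i0 = x")
      case True
      obtain c where c: "c \<in> Ent" using Ent_ne by blast
      obtain d where d: "d \<in> Ext" "(c, d) \<in> S\<^sup>*" using through[OF c] by blast
      have "(d, y) \<in> F\<^sup>*" using path[OF i0(2)] True yN d by auto
      then have "(c, y) \<in> F\<^sup>*" using d SF by (meson rtrancl_trans subsetD)
      moreover have "c \<in> ?IN'" using True i0 c by auto
      ultimately show ?thesis by blast
    next
      case False
      then have "(i0, y) \<in> F\<^sup>*" using path[OF i0(2)] yN by auto
      moreover have "i0 \<in> ?IN'" using False i0 by auto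
      ultimately show ?thesis by blast
    qed
  qed
qed

text \<open>Applied to the flow relation and to its converse, this shows that the substituted net is
  connected in the workflow sense.\<close>

lemma wf_conn_node_subst:
  assumes conn_N: "wf_conn N" and conn_M: "wf_conn M" and x: "x \<in> nodes N"
    and irrefl: "(x, x) \<notin> flow N" and io_M: "inp M \<subseteq> nodes M" "outp M \<subseteq> nodes M"
    and flow: "flow N' = node_subst_flow (flow N) x (flow M) (inp M) (outp M)"
    and inp: "inp N' = (if x \<in> inp N then (inp N - {x}) \<union> inp M else inp N)"
    and outp: "outp N' = (if x \<in> outp N then (outp N - {x}) \<union> outp M else outp N)"
    and nodes_eq: "nodes N' = (nodes N - {x}) \<union> nodes M"
  shows "wf_conn N'"
proof -
  have ne: "inp M \<noteq> {}" "outp M \<noteq> {}" "inp N \<noteq> {}" "outp N \<noteq> {}"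
    using conn_N conn_M unfolding wf_conn_def by auto
  have fwd_N: "\<And>y. y \<in> nodes N \<Longrightarrow> \<exists>i \<in> inp N. (i, y) \<in> (flow N)\<^sup>*"
    and bwd_N: "\<And>y. y \<in> nodes N \<Longrightarrow> \<exists>i \<in> outp N. (i, y) \<in> ((flow N)\<inverse>)\<^sup>*"
    and fwd_M: "\<And>y. y \<in> nodes M \<Longrightarrow> \<exists>i \<in> inp M. (i, y) \<in> (flow M)\<^sup>*"
    and bwd_M: "\<And>y. y \<in> nodes M \<Longrightarrow> \<exists>i \<in> outp M. (i, y) \<in> ((flow M)\<inverse>)\<^sup>*"
    using conn_N conn_M unfolding wf_conn_def by (auto simp: rtrancl_converse)
  have "\<exists>i \<in> inp N'. (i, y) \<in> (flow N')\<^sup>*" if y: "y \<in> nodes N'" for y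
    unfolding inp flow
  proof (rule node_subst_reachable[OF irrefl ne(1) x _ fwd_N fwd_M])
    show "\<And>b. b \<in> inp M \<Longrightarrow> \<exists>c \<in> outp M. (b, c) \<in> (flow M)\<^sup>*"
      using bwd_M io_M by (fastforce simp: rtrancl_converse)
    show "y \<in> (nodes N - {x}) \<union> nodes M" using y unfolding nodes_eq .
  qed
  moreover have "\<exists>i \<in> outp N'. (y, i) \<in> (flow N')\<^sup>*" if y: "y \<in> nodes N'" for y
  proof -
    have "\<exists>i \<in> outp N'. (i, y) \<in> ((flow N')\<inverse>)\<^sup>*"
      unfolding outp flow node_subst_flow_converse
    proof (rule node_subst_reachable[OF _ ne(2) x _ bwd_N bwd_M])
      show "(x, x) \<notin> (flow N)\<inverse>" using irrefl by simp
      show "\<And>b. b \<in> outp M \<Longrightarrow> \<exists>c \<in> inp M. (b, c) \<in> ((flow M)\<inverse>)\<^sup>*"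
        using fwd_M io_M by (fastforce simp: rtrancl_converse)
      show "y \<in> (nodes N - {x}) \<union> nodes M" using y unfolding nodes_eq .
    qed
    then show ?thesis by (auto simp: rtrancl_converse)
  qed
  moreover have "inp N' \<noteq> {}" "outp N' \<noteq> {}" using ne unfolding inp outp by auto
  ultimately show ?thesis unfolding wf_conn_def by blast
qed

lemma petri_net_subst_place:
  assumes pn_N: "petri_net N" and pn_M: "petri_net M" and io_M: "inp M \<subseteq> places M" "outp M \<subseteq> places M"
    and disj: "nodes N \<inter> nodes M = {}" and p: "p \<in> places N"
  shows "petri_net (subst_place N p M)"
proof -
  have "preset N p \<subseteq> trans N" "postset N p \<subseteq> trans N"
    using preset_place_trans[OF pn_N p] postset_place_trans[OF pn_N p] .
  then show ?thesis using pn_N pn_M disj io_M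
    unfolding petri_net_def subst_place_def nodes_def by auto
qed

lemma petri_net_subst_trans:
  assumes pn_N: "petri_net N" and pn_M: "petri_net M" and io_M: "inp M \<subseteq> trans M" "outp M \<subseteq> trans M"
    and disj: "nodes N \<inter> nodes M = {}" and t: "t \<in> trans N"
  shows "petri_net (subst_trans N t M)"
proof -
  have "preset N t \<subseteq> places N" "postset N t \<subseteq> places N"
    using preset_trans_places[OF pn_N t] postset_trans_places[OF pn_N t] .
  moreover have "trans M \<inter> trans N = {}" "places M \<inter> places N = {}"
    using disj unfolding nodes_def by auto
  ultimately show ?thesis using pn_N pn_M io_M disj
    unfolding petri_net_def subst_trans_def nodes_def by auto
qed

lemma subst_place_WF:
  assumes wf_N: "pWF N \<or> tWF N" and pw_M: "pWF M" and disj: "nodes N \<inter> nodes M = {}"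
    and p: "p \<in> places N"
  shows "(pWF N \<longrightarrow> pWF (subst_place N p M)) \<and> (tWF N \<longrightarrow> tWF (subst_place N p M))"
proof -
  let ?N' = "subst_place N p M"
  have pn_N: "petri_net N" and conn_N: "wf_conn N" using wf_N unfolding pWF_def tWF_def by auto
  have pn_M: "petri_net M" and conn_M: "wf_conn M" and io_M: "inp M \<subseteq> places M" "outp M \<subseteq> places M"
    using pw_M unfolding pWF_def by auto
  have p_trans: "p \<notin> trans N" using pn_N p unfolding petri_net_def by auto
  have pn': "petri_net ?N'" using petri_net_subst_place[OF pn_N pn_M io_M disj p] .
  have conn': "wf_conn ?N'"
  proof (rule wf_conn_node_subst[OF conn_N conn_M])
    show "p \<in> nodes N" using p by (simp add: nodes_def)
    show "inp M \<subseteq> nodes M" "outp M \<subseteq> nodes M" using io_M by (auto simp: nodes_def)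
    show "nodes ?N' = (nodes N - {p}) \<union> nodes M"
      using p_trans unfolding nodes_def subst_place_def by auto
  qed (auto simp: flow_irrefl[OF pn_N] subst_place_def node_subst_flow_def preset_def postset_def)
  show ?thesis
    using pn' conn' io_M p_trans unfolding pWF_def tWF_def by (auto simp: subst_place_def)
qed

lemma subst_trans_WF:
  assumes wf_N: "pWF N \<or> tWF N" and tw_M: "tWF M" and disj: "nodes N \<inter> nodes M = {}"
    and t: "t \<in> trans N"
  shows "(pWF N \<longrightarrow> pWF (subst_trans N t M)) \<and> (tWF N \<longrightarrow> tWF (subst_trans N t M))"
proof -
  let ?N' = "subst_trans N t M"
  have pn_N: "petri_net N" and conn_N: "wf_conn N" using wf_N unfolding pWF_def tWF_def by auto
  have pn_M: "petri_net M" and conn_M: "wf_conn M" and io_M: "inp M \<subseteq> trans M" "outp M \<subseteq> trans M"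
    using tw_M unfolding tWF_def by auto
  have t_places: "t \<notin> places N" using pn_N t unfolding petri_net_def by auto
  have pn': "petri_net ?N'" using petri_net_subst_trans[OF pn_N pn_M io_M disj t] .
  have conn': "wf_conn ?N'"
  proof (rule wf_conn_node_subst[OF conn_N conn_M])
    show "t \<in> nodes N" using t by (simp add: nodes_def)
    show "inp M \<subseteq> nodes M" "outp M \<subseteq> nodes M" using io_M by (auto simp: nodes_def)
    have "t \<notin> nodes M" using disj t by (auto simp: nodes_def)
    then show "nodes ?N' = (nodes N - {t}) \<union> nodes M"
      using t_places unfolding nodes_def subst_trans_def by auto
  qed (auto simp: flow_irrefl[OF pn_N] subst_trans_def node_subst_flow_def preset_def postset_def)
  show ?thesis
    using pn' conn' io_M t_places unfolding pWF_def tWF_def by (auto simp: subst_trans_def)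
qed

text \<open>Substitution into a tWF net
  \<open>N\<close> is reduced to substitution into \<open>pc N\<close>, whose nodes have type \<open>'n + bool\<close>; the
  substituted net \<open>M\<close> is then renamed by \<open>Inl\<close>.\<close>

definition rename :: "('a \<Rightarrow> 'b) \<Rightarrow> 'a net \<Rightarrow> 'b net" where
  "rename f N = \<lparr>places = f ` places N, trans = f ` trans N, flow = map_prod f f ` flow N,
                  inp = f ` inp N, outp = f ` outp N\<rparr>"

lemma rename_simps [simp]:
  "places (rename f N) = f ` places N" "trans (rename f N) = f ` trans N"
  "flow (rename f N) = map_prod f f ` flow N" "inp (rename f N) = f ` inp N"
  "outp (rename f N) = f ` outp N"
  unfolding rename_def by simp_all

lemma rename_nodes: "nodes (rename f N) = f ` nodes N"
  unfolding nodes_def by auto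

lemma rename_preset: "inj f \<Longrightarrow> preset (rename f N) (f u) = f ` preset N u"
  unfolding preset_def by (auto simp: inj_eq)

lemma rename_postset: "inj f \<Longrightarrow> postset (rename f N) (f u) = f ` postset N u"
  unfolding postset_def by (auto simp: inj_eq)

lemma rename_petri_net: "inj f \<Longrightarrow> petri_net N \<Longrightarrow> petri_net (rename f N)"
  unfolding petri_net_def by (auto simp: inj_eq image_Int[symmetric])

lemma rename_wf_conn:
  assumes "wf_conn N" shows "wf_conn (rename f N)"
  unfolding wf_conn_def rename_nodes
proof (intro conjI ballI)
  fix y assume "y \<in> f ` nodes N"
  then obtain y0 where y0: "y = f y0" "y0 \<in> nodes N" by auto
  obtain i where "i \<in> inp N" "(i, y0) \<in> (flow N)\<^sup>*"
    using assms y0(2) unfolding wf_conn_def by blast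
  then show "\<exists>i \<in> inp (rename f N). (i, y) \<in> (flow (rename f N))\<^sup>*"
    using rtrancl_map_prod[of i y0 "flow N" f] y0 by auto
next
  fix y assume "y \<in> f ` nodes N"
  then obtain y0 where y0: "y = f y0" "y0 \<in> nodes N" by auto
  obtain o' where "o' \<in> outp N" "(y0, o') \<in> (flow N)\<^sup>*"
    using assms y0(2) unfolding wf_conn_def by blast
  then show "\<exists>o' \<in> outp (rename f N). (y, o') \<in> (flow (rename f N))\<^sup>*"
    using rtrancl_map_prod[of y0 o' "flow N" f] y0 by auto
qed (use assms in \<open>auto simp: wf_conn_def\<close>)

lemma rename_pWF: "inj f \<Longrightarrow> pWF N \<Longrightarrow> pWF (rename f N)"
  unfolding pWF_def using rename_petri_net rename_wf_conn by fastforce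

lemma rename_tWF: "inj f \<Longrightarrow> tWF N \<Longrightarrow> tWF (rename f N)"
  unfolding tWF_def using rename_petri_net rename_wf_conn by fastforce

lemma image_mset_repeat_mset: "image_mset f (repeat_mset n A) = repeat_mset n (image_mset f A)"
  by (induction n) auto

lemma rename_mset_set:
  assumes "inj f" shows "mset_set (f ` A) = image_mset f (mset_set A)"
  by (simp add: image_mset_mset_set inj_on_subset[OF assms])

lemma rename_fire:
  assumes inj: "inj f" and fires: "fire N m m2"
  shows "fire (rename f N) (image_mset f m) (image_mset f m2)"
proof -
  obtain u where u: "u \<in> trans N" "mset_set (preset N u) \<subseteq># m"
    "m2 + mset_set (preset N u) = m + mset_set (postset N u)" using fires by (auto elim: fire_elim)
  show ?thesis
  proof (rule fire_intro[of "f u"])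
    show "f u \<in> trans (rename f N)" using u by simp
    show "mset_set (preset (rename f N) (f u)) \<subseteq># image_mset f m"
      unfolding rename_preset[OF inj] rename_mset_set[OF inj] by (rule image_mset_subseteq_mono[OF u(2)])
    show "image_mset f m2 + mset_set (preset (rename f N) (f u)) = image_mset f m + mset_set (postset (rename f N) (f u))"
      unfolding rename_preset[OF inj] rename_postset[OF inj] rename_mset_set[OF inj]
      using arg_cong[OF u(3), of "image_mset f"] by simp
  qed
qed

lemma rename_fire_inv:
  assumes inj: "inj f" and fires: "fire (rename f N) z z2"
  shows "fire N (image_mset (inv f) z) (image_mset (inv f) z2)"
proof -
  obtain v where v: "v \<in> trans (rename f N)" "mset_set (preset (rename f N) v) \<subseteq># z"
    "z2 + mset_set (preset (rename f N) v) = z + mset_set (postset (rename f N) v)"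
    using fires by (auto elim: fire_elim)
  obtain u where u: "v = f u" "u \<in> trans N" using v(1) by auto
  have inv_image: "image_mset (inv f) (image_mset f A) = A" for A
    by (simp add: image_mset.compositionality inv_o_cancel[OF inj])
  show ?thesis
  proof (rule fire_intro[OF u(2)])
    show "mset_set (preset N u) \<subseteq># image_mset (inv f) z"
      using image_mset_subseteq_mono[OF v(2), of "inv f"]
      unfolding u(1) rename_preset[OF inj] rename_mset_set[OF inj] inv_image .
    show "image_mset (inv f) z2 + mset_set (preset N u) = image_mset (inv f) z + mset_set (postset N u)"
      using arg_cong[OF v(3), of "image_mset (inv f)"]
      unfolding u(1) rename_preset[OF inj] rename_postset[OF inj] rename_mset_set[OF inj]
      by (simp add: inv_image)
  qed
qed

lemma rename_sub_sound:
  assumes inj: "inj f" and sound: "sub_sound_p N"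
  shows "sub_sound_p (rename f N)"
  unfolding sub_sound_p_def
proof (intro allI impI)
  fix k k' m'
  assume kk: "k' \<le> k" and mk: "marking (rename f N) m'"
    and r: "reach (rename f N) (repeat_mset k (mset_set (inp (rename f N))))
      (m' + repeat_mset k' (mset_set (outp (rename f N))))"
  have inv_image: "image_mset (inv f) (image_mset f A) = A" for A
    by (simp add: image_mset.compositionality inv_o_cancel[OF inj])
  have io: "mset_set (inp (rename f N)) = image_mset f (mset_set (inp N))"
    "mset_set (outp (rename f N)) = image_mset f (mset_set (outp N))"
    by (simp_all add: rename_mset_set[OF inj])
  have f_inv_image: "image_mset f (image_mset (inv f) m') = m'"
  proof -
    have "set_mset m' \<subseteq> range f" using mk unfolding marking_def by auto
    then have "image_mset (f \<circ> inv f) m' = image_mset id m'"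
      by (intro image_mset_cong) (auto simp: f_inv_into_f)
    then show ?thesis by (simp add: image_mset.compositionality)
  qed
  have "reach N (image_mset (inv f) (repeat_mset k (mset_set (inp (rename f N)))))
      (image_mset (inv f) (m' + repeat_mset k' (mset_set (outp (rename f N)))))"
    by (rule reach_simulation[OF r[unfolded reach_def]]) (rule fire_reach, rule rename_fire_inv[OF inj])
  then have "reach N (repeat_mset k (mset_set (inp N))) (image_mset (inv f) m' + repeat_mset k' (mset_set (outp N)))"
    unfolding io by (simp add: image_mset_repeat_mset inv_image)
  moreover have "marking N (image_mset (inv f) m')"
    using mk unfolding marking_def by (auto simp: inv_f_f[OF inj])
  ultimately have finish: "reach N (image_mset (inv f) m') (repeat_mset (k - k') (mset_set (outp N)))"
    using sound kk unfolding sub_sound_p_def by blast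
  have "reach (rename f N) (image_mset f (image_mset (inv f) m'))
      (image_mset f (repeat_mset (k - k') (mset_set (outp N))))"
    by (rule reach_simulation[OF finish[unfolded reach_def]]) (rule fire_reach, rule rename_fire[OF inj])
  then show "reach (rename f N) m' (repeat_mset (k - k') (mset_set (outp (rename f N))))"
    unfolding io by (simp add: image_mset_repeat_mset f_inv_image)
qed

lemma pc_rename: "pc (rename f M) = rename (map_sum f id) (pc M)"
  unfolding pc_def rename_def
  by (auto simp: image_Un image_image map_prod_def) (auto intro!: image_eqI)

lemma pc_subst_place:
  assumes tw: "tWF N" and p: "p \<in> places N"
  shows "pc (subst_place N p M) = subst_place (pc N) (Inl p) (rename Inl M)"
proof -
  have p_io: "p \<notin> inp N" "p \<notin> outp N"
    using tw p tWF_petri_net[OF tw] unfolding tWF_def petri_net_def by auto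
  then have "preset (pc N) (Inl p) = Inl ` preset N p" "postset (pc N) (Inl p) = Inl ` postset N p"
    by (simp_all add: pc_preset_Inl pc_postset_Inl)
  then show ?thesis
    unfolding subst_place_def pc_def using p_io by (auto simp: image_Un image_image preset_def postset_def)
qed

lemma pc_subst_trans:
  "pc (subst_trans N t M) = subst_trans (pc N) (Inl t) (rename Inl M)"
  unfolding subst_trans_def pc_preset_Inl pc_postset_Inl pc_def
  by (auto simp: image_Un image_image preset_def postset_def)

text \<open>Sub-soundness is preserved by both kinds of substitution.  If the host net is a tWF net,
  the substitution is carried out in its completion, after renaming the inserted net by
  \<open>Inl\<close>.\<close>

lemma inj_map_sum_Inl: "inj (map_sum Inl id :: 'a + 'c \<Rightarrow> ('a + 'b) + 'c)"
proof (rule injI)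
  fix x y :: "'a + 'c" assume "map_sum Inl id x = (map_sum Inl id y :: ('a + 'b) + 'c)"
  then show "x = y" by (cases x; cases y) auto
qed

lemma subst_place_sub_sound:
  fixes N M :: "'n net"
  assumes sound_N: "sub_sound N" and sound_M: "sub_sound M" and disj: "nodes N \<inter> nodes M = {}"
    and p: "p \<in> places N" and pw_M: "pWF M"
  shows "sub_sound (subst_place N p M)"
proof -
  have ss_M: "sub_sound_p M" using sound_M pw_M not_pWF_and_tWF unfolding sub_sound_def by blast
  have wf_N: "pWF N \<or> tWF N" using sound_N unfolding sub_sound_def by blast
  note WF = subst_place_WF[OF wf_N pw_M disj p]
  show ?thesis
  proof (cases "pWF N")
    case True
    then have "sub_sound_p N" using sound_N not_pWF_and_tWF unfolding sub_sound_def by blast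
    then have "place_subst N M p" using True pw_M disj p ss_M by unfold_locales
    then have "sub_sound_p (subst_place N p M)" by (rule place_subst.sub_sound)
    then show ?thesis using WF True unfolding sub_sound_def by blast
  next
    case False
    then have tw: "tWF N" and ss_N: "sub_sound_p (pc N)" using sound_N unfolding sub_sound_def by auto
    have "place_subst (pc N) (rename Inl M) (Inl p)"
    proof
      show "pWF (pc N)" using pc_pWF[OF tw] .
      show "pWF (rename Inl M)" using pw_M by (simp add: rename_pWF)
      show "sub_sound_p (rename Inl M)"
        by (rule rename_sub_sound[OF _ ss_M]) simp
      show "nodes (pc N) \<inter> nodes (rename Inl M) = {}"
        using disj unfolding pc_nodes rename_nodes by auto
    qed (use p ss_N in auto)
    then have "sub_sound_p (pc (subst_place N p M))"
      unfolding pc_subst_place[OF tw p] by (rule place_subst.sub_sound)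
    then show ?thesis using WF tw unfolding sub_sound_def by blast
  qed
qed

lemma subst_trans_sub_sound:
  fixes N M :: "'n net"
  assumes sound_N: "sub_sound N" and sound_M: "sub_sound M" and disj: "nodes N \<inter> nodes M = {}"
    and t: "t \<in> trans N" and tw_M: "tWF M"
  shows "sub_sound (subst_trans N t M)"
proof -
  have ss_M: "sub_sound_p (pc M)" using sound_M tw_M not_pWF_and_tWF unfolding sub_sound_def by blast
  have wf_N: "pWF N \<or> tWF N" using sound_N unfolding sub_sound_def by blast
  note WF = subst_trans_WF[OF wf_N tw_M disj t]
  show ?thesis
  proof (cases "pWF N")
    case True
    then have "sub_sound_p N" using sound_N not_pWF_and_tWF unfolding sub_sound_def by blast
    then have "trans_subst N M t" using True tw_M disj t ss_M by unfold_locales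
    then have "sub_sound_p (subst_trans N t M)" by (rule trans_subst.sub_sound)
    then show ?thesis using WF True unfolding sub_sound_def by blast
  next
    case False
    then have tw: "tWF N" and ss_N: "sub_sound_p (pc N)" using sound_N unfolding sub_sound_def by auto
    have "trans_subst (pc N) (rename Inl M) (Inl t)"
    proof
      show "pWF (pc N)" using pc_pWF[OF tw] .
      show "tWF (rename Inl M)" using tw_M by (simp add: rename_tWF)
      show "sub_sound_p (pc (rename Inl M))" unfolding pc_rename
        using rename_sub_sound[OF inj_map_sum_Inl ss_M] .
      show "nodes (pc N) \<inter> nodes (rename Inl M) = {}"
        using disj unfolding pc_nodes rename_nodes by auto
    qed (use t ss_N in auto)
    then have "sub_sound_p (pc (subst_trans N t M))"
      unfolding pc_subst_trans by (rule trans_subst.sub_sound)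
    then show ?thesis using WF tw unfolding sub_sound_def by blast
  qed
qed

theorem mainTheorem20:
  fixes N :: "'n net"
  assumes "N \<in> subst_closure (pAND \<union> tAND11 \<union> pOR11 \<union> tOR)"
  shows "sub_sound N"
  using assms
proof (induction rule: subst_closure.induct)
  case (base N)
  then show ?case by (rule base_sub_sound)
next
  case (place N M p)
  then show ?case by (intro subst_place_sub_sound)
next
  case (trans N M t)
  then show ?case by (intro subst_trans_sub_sound)
qed

end
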